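(* Let $\mathbb{X}$ be a topological space with viable base $\Omega_0$, and $\mathbb{D}$ a bc-domain with basis $D_0$. Let $\mathcal{W}$ be the rounded ideal completion of $(\mathbb{B}_{\mathrm{abs}},\prec)$. Then $\mathcal{W}$ is order-isomorphic to $[\widehat{\mathbb{X}}_{\Omega_0}\to\mathbb{D}]$.
   Context: A viable base of $\mathbb{X}=(X,\tau_{\mathbb{X}})$ is a family $\Omega_0\subseteq\tau_{\mathbb{X}}$ closed under finite unions and finite intersections (so $\emptyset,X\in\Omega_0$) which is a base of $\tau_{\mathbb{X}}$. $\mathrm{Idl}(\Omega_0)$ is the complete lattice (under inclusion) of ideals (nonempty, downward closed, directed subsets) of $(\Omega_0,\subseteq)$. $\widehat{\mathbb{X}}_{\Omega_0}$ is the set of completely prime filters of $\mathrm{Idl}(\Omega_0)$ (nonempty upward closed sets closed under binary meets such that $\bigvee A\in F\Rightarrow A\cap F\neq\emptyset$), with the topology whose open sets are exactly $\mathcal{O}_I=\{y: I\in y\}$, $I\in\mathrm{Idl}(\Omega_0)$. A bc-domain is a continuous dcpo with least element $\bot$ in which bounded subsets have joins; $\ll$ is way-below; $\twoheaduparrow b=\{d: b\ll d\}$; a basis $D_0$ is a subset such that each $x$ is the directed join of $\{a\in D_0: a\ll x\}$. $[\widehat{\mathbb{X}}_{\Omega_0}\to\mathbb{D}]$ is the set of functions continuous into the Scott topology of $D$, ordered pointwise. $b\chi_O$ has value $b$ on $O$ and $\bot$ elsewhere; a family $\{b_i\chi_{O_i}\}_{i\in I}$ is consistent if for every $J\subseteq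 I$ with $\bigcap_{j\in J}O_j\neq\emptyset$ the $b_j$ ($j\in J$) have an upper bound. $\mathbb{B}_{\mathrm{abs}}$ is the set of functions $X\to D$ of the form $\bigsqcup_{i\in I}b_i\chi_{O_i}$ (pointwise join) with $I$ finite, the family consistent, $O_i\in\Omega_0$, $b_i\in D_0$; on it, $\bigsqcup_{i\in I}b_i\chi_{O_i}\prec h$ iff $O_i\subseteq h^{-1}(\twoheaduparrow b_i)$ for all $i\in I$. The rounded ideal completion of $(\mathbb{B}_{\mathrm{abs}},\prec)$ is the set of nonempty subsets $R\subseteq\mathbb{B}_{\mathrm{abs}}$ that are $\prec$-downward closed ($h\in R$, $h'\prec h\Rightarrow h'\in R$) and $\prec$-directed (for $h_1,h_2\in R$ there is $h\in R$ with $h_1\prec h$, $h_2\prec h$), ordered by inclusion. *)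

theory Defs
  imports "HOL-Analysis.Abstract_Topology" "HOL-Library.FuncSet"
begin

definition is_lub_in :: "'c set \<Rightarrow> ('c \<Rightarrow> 'c \<Rightarrow> bool) \<Rightarrow> 'c set \<Rightarrow> 'c \<Rightarrow> bool" where
  "is_lub_in C le A z \<longleftrightarrow> z \<in> C \<and> (\<forall>a\<in>A. le a z) \<and> (\<forall>w\<in>C. (\<forall>a\<in>A. le a w) \<longrightarrow> le z w)"

definition is_glb_in :: "'c set \<Rightarrow> ('c \<Rightarrow> 'c \<Rightarrow> bool) \<Rightarrow> 'c set \<Rightarrow> 'c \<Rightarrow> bool" where
  "is_glb_in C le A z \<longleftrightarrow> z \<in> C \<and> (\<forall>a\<in>A. le z a) \<and> (\<forall>w\<in>C. (\<forall>a\<in>A. le w a) \<longrightarrow> le w z)"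

definition is_lub :: "'b::order set \<Rightarrow> 'b \<Rightarrow> bool" where
  "is_lub S z \<longleftrightarrow> is_lub_in UNIV (\<le>) S z"

definition lub :: "'b::order set \<Rightarrow> 'b" where
  "lub S = (THE z. is_lub S z)"

definition directed :: "'b::order set \<Rightarrow> bool" where
  "directed S \<longleftrightarrow> S \<noteq> {} \<and> (\<forall>x\<in>S. \<forall>y\<in>S. \<exists>z\<in>S. x \<le> z \<and> y \<le> z)"

definition is_dcpo :: "'b::order itself \<Rightarrow> bool" where
  "is_dcpo _ \<longleftrightarrow> (\<forall>S::'b set. directed S \<longrightarrow> (\<exists>z. is_lub S z))"

definition way_below :: "'b::order \<Rightarrow> 'b \<Rightarrow> bool" (infix "\<lless>" 50) where
  "x \<lless> y \<longleftrightarrow> (\<forall>S z. directed S \<longrightarrow> is_lub S z \<longrightarrow> y \<le> z \<longrightarrow> (\<exists>s\<in>S. x \<le> s))"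

definition bc_domain :: "'b::order itself \<Rightarrow> bool" where
  "bc_domain T \<longleftrightarrow> is_dcpo T
     \<and> (\<exists>bot::'b. \<forall>x. bot \<le> x)
     \<and> (\<forall>x::'b. directed {a. a \<lless> x} \<and> is_lub {a. a \<lless> x} x)
     \<and> (\<forall>S::'b set. (\<exists>u. \<forall>s\<in>S. s \<le> u) \<longrightarrow> (\<exists>z. is_lub S z))"

definition is_basis :: "'b::order set \<Rightarrow> bool" where
  "is_basis D0 \<longleftrightarrow> (\<forall>x. directed {a\<in>D0. a \<lless> x} \<and> is_lub {a\<in>D0. a \<lless> x} x)"

definition scott_open :: "'b::order set \<Rightarrow> bool" where
  "scott_open U \<longleftrightarrow> (\<forall>x\<in>U. \<forall>y. x \<le> y \<longrightarrow> y \<in> U)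
     \<and> (\<forall>S z. directed S \<longrightarrow> is_lub S z \<longrightarrow> z \<in> U \<longrightarrow> S \<inter> U \<noteq> {})"

definition viable_base :: "'a topology \<Rightarrow> 'a set set \<Rightarrow> bool" where
  "viable_base T \<Omega>0 \<longleftrightarrow> (\<forall>U\<in>\<Omega>0. openin T U)
     \<and> {} \<in> \<Omega>0 \<and> topspace T \<in> \<Omega>0
     \<and> (\<forall>U\<in>\<Omega>0. \<forall>V\<in>\<Omega>0. U \<union> V \<in> \<Omega>0 \<and> U \<inter> V \<in> \<Omega>0)
     \<and> (\<forall>U. openin T U \<longrightarrow> (\<exists>S\<subseteq>\<Omega>0. \<Union>S = U))"

definition Idl :: "'a set set \<Rightarrow> 'a set set set" where
  "Idl \<Omega>0 = {I. I \<subseteq> \<Omega>0 \<and> I \<noteq> {}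
      \<and> (\<forall>a\<in>I. \<forall>b\<in>\<Omega>0. b \<subseteq> a \<longrightarrow> b \<in> I)
      \<and> (\<forall>a\<in>I. \<forall>b\<in>I. \<exists>c\<in>I. a \<subseteq> c \<and> b \<subseteq> c)}"

definition completely_prime_filter :: "'a set set \<Rightarrow> 'a set set set \<Rightarrow> bool" where
  "completely_prime_filter \<Omega>0 F \<longleftrightarrow> F \<subseteq> Idl \<Omega>0 \<and> F \<noteq> {}
     \<and> (\<forall>I\<in>F. \<forall>J\<in>Idl \<Omega>0. I \<subseteq> J \<longrightarrow> J \<in> F)
     \<and> (\<forall>I\<in>F. \<forall>J\<in>F. \<forall>M. is_glb_in (Idl \<Omega>0) (\<subseteq>) {I, J} M \<longrightarrow> M \<in> F)
     \<and> (\<forall>A\<subseteq>Idl \<Omega>0. \<forall>J. is_lub_in (Idl \<Omega>0) (\<subseteq>) A J \<longrightarrow> J \<in> F \<longrightarrow> A \<inter> F \<noteq> {})"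

definition Xhat :: "'a set set \<Rightarrow> 'a set set set set" where
  "Xhat \<Omega>0 = {F. completely_prime_filter \<Omega>0 F}"

definition OI :: "'a set set \<Rightarrow> 'a set set \<Rightarrow> 'a set set set set" where
  "OI \<Omega>0 I = {y \<in> Xhat \<Omega>0. I \<in> y}"

text \<open>The function space [Xhat -> D]: Scott-continuous functions on Xhat
  (extensional, i.e. undefined outside Xhat), ordered pointwise on Xhat.\<close>
definition cont_fun_space :: "'a set set \<Rightarrow> ('a set set set \<Rightarrow> 'b::order) set" where
  "cont_fun_space \<Omega>0 = {f. f \<in> extensional (Xhat \<Omega>0)
      \<and> (\<forall>U. scott_open U \<longrightarrow> (\<exists>I\<in>Idl \<Omega>0. {y \<in> Xhat \<Omega>0. f y \<in> U} = OI \<Omega>0 I))}"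

definition fun_le :: "'c set \<Rightarrow> ('c \<Rightarrow> 'b::order) \<Rightarrow> ('c \<Rightarrow> 'b) \<Rightarrow> bool" where
  "fun_le A f g \<longleftrightarrow> (\<forall>y\<in>A. f y \<le> g y)"

text \<open>Pointwise join of the family b_i chi_{O_i} (i in I) on X (undefined outside X).\<close>
definition step_join :: "'a set \<Rightarrow> nat set \<Rightarrow> (nat \<Rightarrow> 'b::order) \<Rightarrow> (nat \<Rightarrow> 'a set) \<Rightarrow> 'a \<Rightarrow> 'b" where
  "step_join X I b Ob = (\<lambda>x. if x \<in> X then lub {b i | i. i \<in> I \<and> x \<in> Ob i} else undefined)"

definition consistent_family :: "nat set \<Rightarrow> (nat \<Rightarrow> 'b::order) \<Rightarrow> (nat \<Rightarrow> 'a set) \<Rightarrow> bool" where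
  "consistent_family I b Ob \<longleftrightarrow>
     (\<forall>J\<subseteq>I. (\<Inter>j\<in>J. Ob j) \<noteq> {} \<longrightarrow> (\<exists>u. \<forall>j\<in>J. b j \<le> u))"

definition is_rep :: "'a topology \<Rightarrow> 'a set set \<Rightarrow> 'b::order set
    \<Rightarrow> nat set \<Rightarrow> (nat \<Rightarrow> 'b) \<Rightarrow> (nat \<Rightarrow> 'a set) \<Rightarrow> ('a \<Rightarrow> 'b) \<Rightarrow> bool" where
  "is_rep T \<Omega>0 D0 I b Ob h \<longleftrightarrow> finite I \<and> consistent_family I b Ob
     \<and> (\<forall>i\<in>I. Ob i \<in> \<Omega>0 \<and> b i \<in> D0) \<and> h = step_join (topspace T) I b Ob"

definition Babs :: "'a topology \<Rightarrow> 'a set set \<Rightarrow> 'b::order set \<Rightarrow> ('a \<Rightarrow> 'b) set" where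
  "Babs T \<Omega>0 D0 = {h. \<exists>I b Ob. is_rep T \<Omega>0 D0 I b Ob h}"

definition prec :: "'a topology \<Rightarrow> 'a set set \<Rightarrow> 'b::order set \<Rightarrow> ('a \<Rightarrow> 'b) \<Rightarrow> ('a \<Rightarrow> 'b) \<Rightarrow> bool" where
  "prec T \<Omega>0 D0 h' h \<longleftrightarrow> (\<exists>I b Ob. is_rep T \<Omega>0 D0 I b Ob h'
      \<and> (\<forall>i\<in>I. Ob i \<subseteq> {x \<in> topspace T. b i \<lless> h x}))"

definition rounded_ideal_completion :: "'a topology \<Rightarrow> 'a set set \<Rightarrow> 'b::order set \<Rightarrow> ('a \<Rightarrow> 'b) set set" where
  "rounded_ideal_completion T \<Omega>0 D0 = {R. R \<subseteq> Babs T \<Omega>0 D0 \<and> R \<noteq> {}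
      \<and> (\<forall>h\<in>R. \<forall>h'\<in>Babs T \<Omega>0 D0. prec T \<Omega>0 D0 h' h \<longrightarrow> h' \<in> R)
      \<and> (\<forall>h1\<in>R. \<forall>h2\<in>R. \<exists>h\<in>R. prec T \<Omega>0 D0 h1 h \<and> prec T \<Omega>0 D0 h2 h)}"

end

theory Submission
  imports Defs
begin

(* Points of Xhat are completely prime filters of Idl(Om); each is determined by the basic opens
   it contains, and these form a prime filter of the lattice Om. By the prime filter theorem
   (Zorn), Xhat is compact in the following sense: if every point containing the basic open W0
   contains a member of C, then W0 is covered by finitely many members of C.
   A step function h extends to Xhat by taking at F the best value h attains on a whole basic
   neighbourhood of F. A rounded ideal R goes to the pointwise supremum of the extensions of its
   members, and a continuous f goes back to the step functions whose generators are way below f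
   throughout their opens. Interpolation for the way-below relation together with compactness
   shows that the latter set is a rounded ideal and that the two maps are mutually inverse and
   monotone. *)

lemma is_lub_iff: "is_lub S z \<longleftrightarrow> (\<forall>s\<in>S. s \<le> z) \<and> (\<forall>u. (\<forall>s\<in>S. s \<le> u) \<longrightarrow> z \<le> u)"
  by (auto simp: is_lub_def is_lub_in_def)

lemma is_lub_upper: "is_lub S z \<Longrightarrow> s \<in> S \<Longrightarrow> s \<le> z"
  by (auto simp: is_lub_iff)

lemma is_lub_least: "is_lub S z \<Longrightarrow> (\<And>s. s \<in> S \<Longrightarrow> s \<le> u) \<Longrightarrow> z \<le> u"
  by (auto simp: is_lub_iff)

lemma is_lub_unique: "is_lub S a \<Longrightarrow> is_lub S b \<Longrightarrow> a = b"
  by (meson antisym is_lub_iff)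

lemma lub_eqI: "is_lub S z \<Longrightarrow> lub S = z"
  unfolding lub_def by (rule the_equality) (auto intro: is_lub_unique)

lemma is_lub_mono: "is_lub S a \<Longrightarrow> is_lub S' b \<Longrightarrow> S \<subseteq> S' \<Longrightarrow> a \<le> b"
  by (meson is_lub_iff subsetD)

lemma is_lub_singleton: "is_lub {a} a"
  by (auto simp: is_lub_iff)

lemma is_lub_singleton_eq: "is_lub {a} z \<Longrightarrow> z = a"
  using is_lub_singleton is_lub_unique by blast

lemma directed_singleton: "directed {a}"
  by (auto simp: directed_def)

lemma way_below_imp_le: "a \<lless> b \<Longrightarrow> a \<le> b"
  unfolding way_below_def using directed_singleton is_lub_singleton by fastforce

lemma way_below_mono: "a' \<le> a \<Longrightarrow> a \<lless> b \<Longrightarrow> b \<le> b' \<Longrightarrow> a' \<lless> b'"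
  unfolding way_below_def by (meson order_trans)

lemma way_below_le_trans: "a \<lless> b \<Longrightarrow> b \<le> c \<Longrightarrow> a \<lless> c"
  using way_below_mono by blast

lemma way_below_lubE: "a \<lless> z \<Longrightarrow> directed S \<Longrightarrow> is_lub S z \<Longrightarrow> \<exists>s\<in>S. a \<le> s"
  unfolding way_below_def by blast

(* Step functions are indexed by finite sets of naturals, so joining two of them needs re-indexing. *)
definition interleave :: "(nat \<Rightarrow> 'b) \<Rightarrow> (nat \<Rightarrow> 'b) \<Rightarrow> nat \<Rightarrow> 'b" where
  "interleave f g j = (if even j then f (j div 2) else g (j div 2))"

definition interleave_index :: "nat set \<Rightarrow> nat set \<Rightarrow> nat set" where
  "interleave_index IA IB = (\<lambda>i. 2 * i) ` IA \<union> (\<lambda>i. 2 * i + 1) ` IB"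

lemma finite_interleave_index: "finite IA \<Longrightarrow> finite IB \<Longrightarrow> finite (interleave_index IA IB)"
  unfolding interleave_index_def by simp

lemma image_interleave:
  "(\<lambda>j. (interleave bA bB j, interleave OA OB j)) ` interleave_index IA IB
     = (\<lambda>i. (bA i, OA i)) ` IA \<union> (\<lambda>i. (bB i, OB i)) ` IB"
  unfolding interleave_index_def image_Un image_image interleave_def by simp

locale bc_domain_basis =
  fixes D0 :: "'b::order set"
  assumes bc: "bc_domain TYPE('b)" and basis: "is_basis D0"
begin

lemma directed_has_lub: "directed (S::'b set) \<Longrightarrow> \<exists>z. is_lub S z"
  using bc unfolding bc_domain_def is_dcpo_def by blast

lemma bounded_has_lub: "(\<And>s. s \<in> S \<Longrightarrow> s \<le> (u::'b)) \<Longrightarrow> \<exists>z. is_lub S z"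
  using bc unfolding bc_domain_def by blast

lemma basis_directed: "directed {a\<in>D0. a \<lless> x}"
  and basis_lub: "is_lub {a\<in>D0. a \<lless> x} x"
  using basis unfolding is_basis_def by auto

lemma way_below_interpolate:
  assumes "a \<lless> z"
  shows "\<exists>c\<in>D0. a \<lless> c \<and> c \<lless> z"
proof -
  define M where "M = {c\<in>D0. \<exists>d\<in>D0. c \<lless> d \<and> d \<lless> z}"
  have "directed M"
    unfolding directed_def
  proof (intro conjI ballI)
    obtain d where d: "d \<in> D0" "d \<lless> z" using basis_directed[of z] unfolding directed_def by blast
    obtain c where "c \<in> D0" "c \<lless> d" using basis_directed[of d] unfolding directed_def by blast
    then show "M \<noteq> {}" using d unfolding M_def by blast
  next
    fix x y assume "x \<in> M" "y \<in> M"
    then obtain d1 d2 where x: "x \<in> D0" "d1 \<in> D0" "x \<lless> d1" "d1 \<lless> z"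
      and y: "y \<in> D0" "d2 \<in> D0" "y \<lless> d2" "d2 \<lless> z" unfolding M_def by blast
    obtain d3 where d3: "d3 \<in> D0" "d3 \<lless> z" "d1 \<le> d3" "d2 \<le> d3"
      using basis_directed[of z] x y unfolding directed_def by blast
    have "x \<lless> d3" "y \<lless> d3" using x y d3 way_below_le_trans by blast+
    then obtain c where "c \<in> D0" "c \<lless> d3" "x \<le> c" "y \<le> c"
      using basis_directed[of d3] x y unfolding directed_def by blast
    then show "\<exists>c\<in>M. x \<le> c \<and> y \<le> c" using d3 unfolding M_def by blast
  qed
  moreover have "is_lub M z"
    unfolding is_lub_iff
  proof (intro conjI allI impI ballI)
    fix s assume "s \<in> M"
    then show "s \<le> z" unfolding M_def using way_below_imp_le order_trans by blast
  next
    fix u assume "\<forall>s\<in>M. s \<le> u"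
    then have "d \<le> u" if "d \<in> D0" "d \<lless> z" for d
      using is_lub_least[OF basis_lub[of d]] that unfolding M_def by blast
    then show "z \<le> u" using is_lub_least[OF basis_lub[of z]] by blast
  qed
  ultimately obtain c where "c \<in> M" "a \<le> c" using way_below_lubE[OF assms] by blast
  then show ?thesis unfolding M_def using way_below_mono by blast
qed

lemma scott_open_way_above: "scott_open {z. (a::'b) \<lless> z}"
proof -
  have "S \<inter> {z. a \<lless> z} \<noteq> {}" if S: "directed S" "is_lub S z" and "a \<lless> z" for S z
  proof -
    obtain c where "a \<lless> c" "c \<lless> z" using way_below_interpolate[OF \<open>a \<lless> z\<close>] by blast
    then obtain s where "s \<in> S" "c \<le> s" using way_below_lubE[OF _ S] by blast
    then show ?thesis using \<open>a \<lless> c\<close> way_below_le_trans by blast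
  qed
  then show ?thesis unfolding scott_open_def using way_below_le_trans by blast
qed

end

locale viable =
  fixes T :: "'a topology" and Om :: "'a set set"
  assumes viable: "viable_base T Om"
begin

abbreviation "X \<equiv> topspace T"

lemma Om_subset: "U \<in> Om \<Longrightarrow> U \<subseteq> X"
  using viable unfolding viable_base_def by (simp add: openin_subset)

lemma Om_empty: "{} \<in> Om"
  and Om_topspace: "X \<in> Om"
  and Om_Un_Int: "\<forall>U\<in>Om. \<forall>V\<in>Om. U \<union> V \<in> Om \<and> U \<inter> V \<in> Om"
  using viable unfolding viable_base_def by simp_all

lemma Om_Un: "U \<in> Om \<Longrightarrow> V \<in> Om \<Longrightarrow> U \<union> V \<in> Om"
  and Om_Int: "U \<in> Om \<Longrightarrow> V \<in> Om \<Longrightarrow> U \<inter> V \<in> Om"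
  using Om_Un_Int by simp_all

lemma Om_Union: "finite K \<Longrightarrow> K \<subseteq> Om \<Longrightarrow> \<Union>K \<in> Om"
  by (induction K rule: finite_induct) (auto intro: Om_Un Om_empty)

lemma IdlI:
  assumes "I \<subseteq> Om" "I \<noteq> {}" "\<And>a b. a \<in> I \<Longrightarrow> b \<in> Om \<Longrightarrow> b \<subseteq> a \<Longrightarrow> b \<in> I"
    "\<And>a b. a \<in> I \<Longrightarrow> b \<in> I \<Longrightarrow> \<exists>c\<in>I. a \<subseteq> c \<and> b \<subseteq> c"
  shows "I \<in> Idl Om"
  using assms unfolding Idl_def by simp

lemma IdlD:
  assumes "I \<in> Idl Om"
  shows "I \<subseteq> Om" "I \<noteq> {}" "\<And>a b. a \<in> I \<Longrightarrow> b \<in> Om \<Longrightarrow> b \<subseteq> a \<Longrightarrow> b \<in> I"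
    "\<And>a b. a \<in> I \<Longrightarrow> b \<in> I \<Longrightarrow> \<exists>c\<in>I. a \<subseteq> c \<and> b \<subseteq> c"
  using assms unfolding Idl_def by simp_all

lemma Idl_empty: "I \<in> Idl Om \<Longrightarrow> {} \<in> I"
  using IdlD[of I] Om_empty by blast

lemma Idl_Un:
  assumes "I \<in> Idl Om" "a \<in> I" "b \<in> I"
  shows "a \<union> b \<in> I"
proof -
  obtain c where "c \<in> I" "a \<subseteq> c" "b \<subseteq> c" using IdlD(4)[OF assms] by blast
  moreover have "a \<union> b \<in> Om" using assms Om_Un IdlD(1) by blast
  ultimately show ?thesis using IdlD(3)[OF assms(1)] by blast
qed

definition principal :: "'a set \<Rightarrow> 'a set set" where
  "principal W = {U\<in>Om. U \<subseteq> W}"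

lemma principal_Idl: "W \<in> Om \<Longrightarrow> principal W \<in> Idl Om"
  by (rule IdlI) (auto simp: principal_def intro: Om_empty Om_Un)

lemma Om_Idl: "Om \<in> Idl Om"
proof -
  have "principal X = Om" using Om_subset unfolding principal_def by auto
  then show ?thesis using principal_Idl[OF Om_topspace] by simp
qed

lemma Idl_principal_subset: "I \<in> Idl Om \<Longrightarrow> W \<in> I \<Longrightarrow> principal W \<subseteq> I"
  unfolding principal_def using IdlD(3) by blast

lemma is_glb_principal_Int:
  assumes "U \<in> Om" "V \<in> Om"
  shows "is_glb_in (Idl Om) (\<subseteq>) {principal U, principal V} (principal (U \<inter> V))"
proof -
  have "principal (U \<inter> V) \<in> Idl Om" using principal_Idl Om_Int assms by blast
  then show ?thesis unfolding is_glb_in_def by (auto simp: principal_def)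
qed

lemma is_lub_principal_Un:
  assumes "U \<in> Om" "V \<in> Om"
  shows "is_lub_in (Idl Om) (\<subseteq>) {principal U, principal V} (principal (U \<union> V))"
proof -
  have "principal (U \<union> V) \<subseteq> J" if "J \<in> Idl Om" "principal U \<subseteq> J" "principal V \<subseteq> J" for J
  proof -
    have "U \<in> J" "V \<in> J" using that assms unfolding principal_def by auto
    then show ?thesis using Idl_Un Idl_principal_subset \<open>J \<in> Idl Om\<close> by blast
  qed
  then show ?thesis
    unfolding is_lub_in_def using principal_Idl Om_Un assms by (auto simp: principal_def)
qed

lemma is_lub_principal_empty: "is_lub_in (Idl Om) (\<subseteq>) {} (principal {})"
  unfolding is_lub_in_def using principal_Idl[OF Om_empty] Idl_empty
  by (auto simp: principal_def)

lemma is_lub_principal_image: "I \<in> Idl Om \<Longrightarrow> is_lub_in (Idl Om) (\<subseteq>) (principal ` I) I"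
  unfolding is_lub_in_def using Idl_principal_subset IdlD(1)
  by (fastforce simp: principal_def)

(* Points of Xhat correspond to prime filters of Om: F gives the basic opens in F, point_of goes back. *)
definition opens_at :: "'a set set set \<Rightarrow> 'a set set" where
  "opens_at F = {W\<in>Om. principal W \<in> F}"

definition prime_filter :: "'a set set \<Rightarrow> bool" where
  "prime_filter P \<longleftrightarrow> P \<subseteq> Om \<and> X \<in> P \<and> {} \<notin> P \<and> (\<forall>U\<in>P. \<forall>V\<in>Om. U \<subseteq> V \<longrightarrow> V \<in> P)
     \<and> (\<forall>U\<in>P. \<forall>V\<in>P. U \<inter> V \<in> P) \<and> (\<forall>U\<in>Om. \<forall>V\<in>Om. U \<union> V \<in> P \<longrightarrow> U \<in> P \<or> V \<in> P)"

definition point_of :: "'a set set \<Rightarrow> 'a set set set" where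
  "point_of P = {I\<in>Idl Om. I \<inter> P \<noteq> {}}"

lemma XhatD:
  assumes "F \<in> Xhat Om"
  shows "F \<subseteq> Idl Om" "F \<noteq> {}" "\<And>I J. I \<in> F \<Longrightarrow> J \<in> Idl Om \<Longrightarrow> I \<subseteq> J \<Longrightarrow> J \<in> F"
    "\<And>I J M. I \<in> F \<Longrightarrow> J \<in> F \<Longrightarrow> is_glb_in (Idl Om) (\<subseteq>) {I, J} M \<Longrightarrow> M \<in> F"
    "\<And>A J. A \<subseteq> Idl Om \<Longrightarrow> is_lub_in (Idl Om) (\<subseteq>) A J \<Longrightarrow> J \<in> F \<Longrightarrow> A \<inter> F \<noteq> {}"
proof -
  note cpf = assms[unfolded Xhat_def mem_Collect_eq completely_prime_filter_def]
  show "F \<subseteq> Idl Om" using cpf by (rule conjunct1)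
  show "F \<noteq> {}" using cpf by blast
  show "\<And>I J. I \<in> F \<Longrightarrow> J \<in> Idl Om \<Longrightarrow> I \<subseteq> J \<Longrightarrow> J \<in> F" using cpf by blast
  show "\<And>I J M. I \<in> F \<Longrightarrow> J \<in> F \<Longrightarrow> is_glb_in (Idl Om) (\<subseteq>) {I, J} M \<Longrightarrow> M \<in> F"
    using cpf by blast
  show "\<And>A J. A \<subseteq> Idl Om \<Longrightarrow> is_lub_in (Idl Om) (\<subseteq>) A J \<Longrightarrow> J \<in> F \<Longrightarrow> A \<inter> F \<noteq> {}"
    using cpf by blast
qed

lemma prime_filterI:
  assumes "P \<subseteq> Om" "X \<in> P" "{} \<notin> P" "\<And>U V. U \<in> P \<Longrightarrow> V \<in> Om \<Longrightarrow> U \<subseteq> V \<Longrightarrow> V \<in> P"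
    "\<And>U V. U \<in> P \<Longrightarrow> V \<in> P \<Longrightarrow> U \<inter> V \<in> P"
    "\<And>U V. U \<in> Om \<Longrightarrow> V \<in> Om \<Longrightarrow> U \<union> V \<in> P \<Longrightarrow> U \<in> P \<or> V \<in> P"
  shows "prime_filter P"
  unfolding prime_filter_def using assms by blast

lemma prime_filterD:
  assumes "prime_filter P"
  shows "P \<subseteq> Om" "X \<in> P" "{} \<notin> P" "\<And>U V. U \<in> P \<Longrightarrow> V \<in> Om \<Longrightarrow> U \<subseteq> V \<Longrightarrow> V \<in> P"
    "\<And>U V. U \<in> P \<Longrightarrow> V \<in> P \<Longrightarrow> U \<inter> V \<in> P"
    "\<And>U V. U \<in> Om \<Longrightarrow> V \<in> Om \<Longrightarrow> U \<union> V \<in> P \<Longrightarrow> U \<in> P \<or> V \<in> P"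
  using assms unfolding prime_filter_def by simp_all

lemma prime_filter_Inter:
  assumes "prime_filter P" "finite K" "K \<subseteq> P"
  shows "X \<inter> \<Inter>K \<in> P"
  using assms(2,3)
proof (induction K rule: finite_induct)
  case empty
  then show ?case using prime_filterD(2)[OF assms(1)] by simp
next
  case (insert a K)
  have "X \<inter> \<Inter>(insert a K) = a \<inter> (X \<inter> \<Inter>K)"
    using insert Om_subset prime_filterD(1)[OF assms(1)] by blast
  then show ?case using insert prime_filterD(5)[OF assms(1)] by simp
qed

lemma prime_filter_Union:
  assumes "prime_filter P" "finite K" "K \<subseteq> Om" "\<Union>K \<in> P"
  shows "\<exists>U\<in>K. U \<in> P"
  using assms(2-4)
proof (induction K rule: finite_induct)
  case empty
  then show ?case using prime_filterD(3)[OF assms(1)] by simp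
next
  case (insert a K)
  then have "a \<in> P \<or> \<Union>K \<in> P" using prime_filterD(6)[OF assms(1)] Om_Union by simp
  then show ?case using insert by blast
qed

lemma opens_at_subset: "opens_at F \<subseteq> Om"
  unfolding opens_at_def by blast

lemma prime_filter_opens_at:
  assumes F: "F \<in> Xhat Om"
  shows "prime_filter (opens_at F)"
proof (rule prime_filterI)
  show "opens_at F \<subseteq> Om" by (rule opens_at_subset)
next
  obtain I where I: "I \<in> F" using XhatD(2)[OF F] by blast
  have "I \<subseteq> Om" using IdlD(1) XhatD(1)[OF F] I by auto
  then have "I \<subseteq> principal X" using Om_subset unfolding principal_def by auto
  then have "principal X \<in> F" using XhatD(3)[OF F I] principal_Idl[OF Om_topspace] by simp
  then show "X \<in> opens_at F" using Om_topspace unfolding opens_at_def by simp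
next
  have "principal {} \<notin> F" using XhatD(5)[OF F, of "{}"] is_lub_principal_empty by auto
  then show "{} \<notin> opens_at F" unfolding opens_at_def by simp
next
  fix U V assume "U \<in> opens_at F" "V \<in> Om" "U \<subseteq> V"
  then have "principal U \<in> F" "principal U \<subseteq> principal V"
    unfolding opens_at_def principal_def by auto
  then show "V \<in> opens_at F"
    using XhatD(3)[OF F] principal_Idl[OF \<open>V \<in> Om\<close>] \<open>V \<in> Om\<close> unfolding opens_at_def by simp
next
  fix U V assume "U \<in> opens_at F" "V \<in> opens_at F"
  then have "U \<in> Om" "V \<in> Om" "principal U \<in> F" "principal V \<in> F" unfolding opens_at_def by auto
  then have "principal (U \<inter> V) \<in> F" using XhatD(4)[OF F] is_glb_principal_Int by blast
  then show "U \<inter> V \<in> opens_at F" using Om_Int \<open>U \<in> Om\<close> \<open>V \<in> Om\<close> unfolding opens_at_def by simp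
next
  fix U V assume UV: "U \<in> Om" "V \<in> Om" "U \<union> V \<in> opens_at F"
  have "{principal U, principal V} \<subseteq> Idl Om" using principal_Idl UV by simp
  moreover have "principal (U \<union> V) \<in> F" using UV(3) unfolding opens_at_def by simp
  ultimately have "{principal U, principal V} \<inter> F \<noteq> {}"
    using XhatD(5)[OF F _ is_lub_principal_Un[OF UV(1,2)]] by simp
  then show "U \<in> opens_at F \<or> V \<in> opens_at F" using UV unfolding opens_at_def by auto
qed

lemma mem_Xhat_iff:
  assumes F: "F \<in> Xhat Om" and I: "I \<in> Idl Om"
  shows "I \<in> F \<longleftrightarrow> (\<exists>W\<in>I. W \<in> opens_at F)"
proof
  assume "I \<in> F"
  moreover have "principal ` I \<subseteq> Idl Om" using principal_Idl IdlD(1)[OF I] by auto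
  ultimately have "principal ` I \<inter> F \<noteq> {}"
    using XhatD(5)[OF F] is_lub_principal_image[OF I] by simp
  then show "\<exists>W\<in>I. W \<in> opens_at F" using IdlD(1)[OF I] unfolding opens_at_def by auto
next
  assume "\<exists>W\<in>I. W \<in> opens_at F"
  then obtain W where "W \<in> I" "principal W \<in> F" unfolding opens_at_def by auto
  then show "I \<in> F" using XhatD(3)[OF F _ I] Idl_principal_subset[OF I] by simp
qed

lemma opens_at_point_of:
  assumes P: "prime_filter P"
  shows "opens_at (point_of P) = P"
proof (intro set_eqI iffI)
  fix W assume "W \<in> opens_at (point_of P)"
  then obtain U where "W \<in> Om" "U \<in> P" "U \<subseteq> W"
    unfolding opens_at_def point_of_def principal_def by auto
  then show "W \<in> P" using prime_filterD(4)[OF P] by simp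
next
  fix W assume "W \<in> P"
  then have "W \<in> Om" "W \<in> principal W" using prime_filterD(1)[OF P] unfolding principal_def by auto
  then show "W \<in> opens_at (point_of P)"
    using \<open>W \<in> P\<close> principal_Idl unfolding opens_at_def point_of_def by auto
qed

definition finite_cover_ideal :: "'a set set \<Rightarrow> 'a set set" where
  "finite_cover_ideal C = {W\<in>Om. \<exists>C'. finite C' \<and> C' \<subseteq> C \<and> W \<subseteq> \<Union>C'}"

lemma finite_cover_idealI:
  assumes "W \<in> Om" "finite C'" "C' \<subseteq> C" "W \<subseteq> \<Union>C'"
  shows "W \<in> finite_cover_ideal C"
  using assms unfolding finite_cover_ideal_def by auto

lemma finite_cover_ideal_Idl: "finite_cover_ideal C \<in> Idl Om"
proof (rule IdlI)
  show "finite_cover_ideal C \<subseteq> Om" unfolding finite_cover_ideal_def by auto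
  show "finite_cover_ideal C \<noteq> {}" using finite_cover_idealI[OF Om_empty, of "{}"] by auto
next
  fix a b assume "a \<in> finite_cover_ideal C" "b \<in> Om" "b \<subseteq> a"
  moreover obtain C' where "finite C'" "C' \<subseteq> C" "a \<subseteq> \<Union>C'"
    using \<open>a \<in> finite_cover_ideal C\<close> unfolding finite_cover_ideal_def by auto
  ultimately show "b \<in> finite_cover_ideal C" using finite_cover_idealI[of b C' C] by auto
next
  fix a b assume "a \<in> finite_cover_ideal C" "b \<in> finite_cover_ideal C"
  then obtain C1 C2 where "finite C1" "C1 \<subseteq> C" "a \<subseteq> \<Union>C1" "a \<in> Om"
    "finite C2" "C2 \<subseteq> C" "b \<subseteq> \<Union>C2" "b \<in> Om"
    unfolding finite_cover_ideal_def by auto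
  moreover have "a \<union> b \<subseteq> \<Union>(C1 \<union> C2)" using \<open>a \<subseteq> \<Union>C1\<close> \<open>b \<subseteq> \<Union>C2\<close> by auto
  ultimately have "a \<union> b \<in> finite_cover_ideal C"
    using finite_cover_idealI[of "a \<union> b" "C1 \<union> C2" C] Om_Un by auto
  then show "\<exists>c\<in>finite_cover_ideal C. a \<subseteq> c \<and> b \<subseteq> c" by auto
qed

lemma mem_finite_cover_ideal: "W \<in> C \<Longrightarrow> C \<subseteq> Om \<Longrightarrow> W \<in> finite_cover_ideal C"
  by (rule finite_cover_idealI[of _ "{W}"]) auto

lemma point_of_glb:
  assumes P: "prime_filter P" and "I \<in> point_of P" "J \<in> point_of P"
    and M: "is_glb_in (Idl Om) (\<subseteq>) {I, J} M"
  shows "M \<in> point_of P"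
proof -
  obtain U V where UV: "U \<in> I" "U \<in> P" "V \<in> J" "V \<in> P" and IJ: "I \<in> Idl Om" "J \<in> Idl Om"
    using assms(2,3) unfolding point_of_def by auto
  then have W: "U \<inter> V \<in> P" "U \<inter> V \<in> Om" using prime_filterD(1,5)[OF P] by auto
  then have "U \<inter> V \<in> I" "U \<inter> V \<in> J" using IdlD(3) IJ UV by auto
  then have "principal (U \<inter> V) \<subseteq> I" "principal (U \<inter> V) \<subseteq> J" using Idl_principal_subset IJ by auto
  then have "principal (U \<inter> V) \<subseteq> M"
    using M principal_Idl[OF W(2)] unfolding is_glb_in_def by simp
  moreover have "U \<inter> V \<in> principal (U \<inter> V)" using W(2) unfolding principal_def by simp
  moreover have "M \<in> Idl Om" using M unfolding is_glb_in_def by simp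
  ultimately show ?thesis using W(1) unfolding point_of_def by auto
qed

lemma point_of_completely_prime:
  assumes P: "prime_filter P" and A: "A \<subseteq> Idl Om"
    and J: "is_lub_in (Idl Om) (\<subseteq>) A J" "J \<in> point_of P"
  shows "A \<inter> point_of P \<noteq> {}"
proof -
  have UA: "\<Union>A \<subseteq> Om" using A IdlD(1) by auto
  then have "\<forall>I\<in>A. I \<subseteq> finite_cover_ideal (\<Union>A)" using mem_finite_cover_ideal[OF _ UA] by auto
  then have "J \<subseteq> finite_cover_ideal (\<Union>A)"
    using J(1) finite_cover_ideal_Idl unfolding is_lub_in_def by simp
  moreover obtain U where "U \<in> J" "U \<in> P" using J(2) unfolding point_of_def by auto
  ultimately obtain A' where A': "finite A'" "A' \<subseteq> \<Union>A" "U \<subseteq> \<Union>A'"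
    unfolding finite_cover_ideal_def by auto
  have "A' \<subseteq> Om" using A' UA by auto
  then have "\<Union>A' \<in> P" using prime_filterD(4)[OF P \<open>U \<in> P\<close>] Om_Union A' by simp
  then obtain W where "W \<in> A'" "W \<in> P" using prime_filter_Union[OF P A'(1) \<open>A' \<subseteq> Om\<close>] by auto
  moreover obtain I where "I \<in> A" "W \<in> I" using \<open>W \<in> A'\<close> A'(2) by auto
  ultimately show ?thesis using A unfolding point_of_def by auto
qed

lemma point_of_Xhat:
  assumes P: "prime_filter P"
  shows "point_of P \<in> Xhat Om"
proof -
  have "Om \<in> point_of P"
    using Om_Idl Om_topspace prime_filterD(2)[OF P] unfolding point_of_def by auto
  then have "point_of P \<noteq> {}" by auto
  moreover have "point_of P \<subseteq> Idl Om" unfolding point_of_def by auto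
  moreover have "\<forall>I\<in>point_of P. \<forall>J\<in>Idl Om. I \<subseteq> J \<longrightarrow> J \<in> point_of P"
    unfolding point_of_def by fast
  moreover have "\<forall>I\<in>point_of P. \<forall>J\<in>point_of P. \<forall>M. is_glb_in (Idl Om) (\<subseteq>) {I, J} M \<longrightarrow> M \<in> point_of P"
    by (intro ballI allI impI) (rule point_of_glb[OF P])
  moreover have "\<forall>A\<subseteq>Idl Om. \<forall>J. is_lub_in (Idl Om) (\<subseteq>) A J \<longrightarrow> J \<in> point_of P \<longrightarrow> A \<inter> point_of P \<noteq> {}"
    by (intro allI impI) (rule point_of_completely_prime[OF P])
  ultimately have "completely_prime_filter Om (point_of P)"
    unfolding completely_prime_filter_def by (intro conjI)
  then show ?thesis unfolding Xhat_def by simp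
qed

lemma Idl_Union_chain:
  assumes "C \<noteq> {}" "C \<subseteq> Idl Om" "chain\<^sub>\<subseteq> C"
  shows "\<Union>C \<in> Idl Om"
proof (rule IdlI)
  show "\<Union>C \<subseteq> Om" using assms(2) IdlD(1) by auto
  show "\<Union>C \<noteq> {}" using assms(1,2) IdlD(2) by auto
  show "b \<in> \<Union>C" if ab: "a \<in> \<Union>C" "b \<in> Om" "b \<subseteq> a" for a b
  proof -
    obtain I where "I \<in> C" "a \<in> I" using ab(1) by auto
    then have "b \<in> I" using ab(2,3) assms(2) IdlD(3) by auto
    then show ?thesis using \<open>I \<in> C\<close> by auto
  qed
  show "\<exists>c\<in>\<Union>C. a \<subseteq> c \<and> b \<subseteq> c" if ab: "a \<in> \<Union>C" "b \<in> \<Union>C" for a b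
  proof -
    obtain I1 I2 where I: "I1 \<in> C" "I2 \<in> C" "a \<in> I1" "b \<in> I2" using ab by auto
    then obtain I where "I \<in> C" "a \<in> I" "b \<in> I"
      using assms(3) unfolding chain_subset_def by (metis subsetD)
    moreover have "I \<in> Idl Om" using \<open>I \<in> C\<close> assms(2) by auto
    ultimately show ?thesis using IdlD(4) by (metis UnionI)
  qed
qed

lemma maximal_ideal_avoiding:
  assumes "K \<in> Idl Om" "W0 \<notin> K"
  obtains M where "M \<in> Idl Om" "K \<subseteq> M" "W0 \<notin> M"
    "\<And>N. N \<in> Idl Om \<Longrightarrow> M \<subseteq> N \<Longrightarrow> W0 \<notin> N \<Longrightarrow> N = M"
proof -
  define A where "A = {I \<in> Idl Om. K \<subseteq> I \<and> W0 \<notin> I}"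
  have "\<exists>U\<in>A. \<forall>I\<in>C. I \<subseteq> U" if "C \<in> chains A" for C
  proof (cases "C = {}")
    case True
    then show ?thesis using assms unfolding A_def by auto
  next
    case False
    have "C \<subseteq> A" "chain\<^sub>\<subseteq> C" using that unfolding chains_def by auto
    then have "\<Union>C \<in> A" using Idl_Union_chain[OF False] False unfolding A_def by auto
    then show ?thesis by auto
  qed
  then obtain M where "M \<in> A" "\<forall>N\<in>A. M \<subseteq> N \<longrightarrow> N = M"
    using Zorn_Lemma2[of A] by auto
  then show ?thesis using that unfolding A_def by auto
qed

lemma Idl_adjoin:
  assumes M: "M \<in> Idl Om"
  shows "{U\<in>Om. \<exists>a\<in>M. U \<subseteq> a \<union> W} \<in> Idl Om" (is "?N \<in> _")
proof (rule IdlI)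
  show "?N \<subseteq> Om" by auto
  have "{} \<in> ?N" using Om_empty Idl_empty[OF M] by auto
  then show "?N \<noteq> {}" by auto
  show "b \<in> ?N" if ab: "a \<in> ?N" "b \<in> Om" "b \<subseteq> a" for a b
  proof -
    obtain c where "c \<in> M" "a \<subseteq> c \<union> W" using ab(1) by auto
    then show ?thesis using ab(2,3) by auto
  qed
  show "\<exists>c\<in>?N. a \<subseteq> c \<and> b \<subseteq> c" if ab: "a \<in> ?N" "b \<in> ?N" for a b
  proof -
    obtain a1 a2 where "a1 \<in> M" "a2 \<in> M" "a \<subseteq> a1 \<union> W" "b \<subseteq> a2 \<union> W" "a \<in> Om" "b \<in> Om"
      using ab by auto
    then have "a1 \<union> a2 \<in> M" "a \<union> b \<subseteq> (a1 \<union> a2) \<union> W" "a \<union> b \<in> Om"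
      using Idl_Un[OF M] Om_Un by auto
    then have "a \<union> b \<in> ?N" by auto
    then show ?thesis by auto
  qed
qed

lemma prime_filter_complement:
  assumes W0: "W0 \<in> Om" and M: "M \<in> Idl Om" "W0 \<notin> M"
    and maximal: "\<And>N. N \<in> Idl Om \<Longrightarrow> M \<subseteq> N \<Longrightarrow> W0 \<notin> N \<Longrightarrow> N = M"
  shows "prime_filter (Om - M)"
proof -
  have absorb: "\<exists>a\<in>M. W0 \<subseteq> a \<union> W" if "W \<in> Om" "W \<notin> M" for W
  proof (rule ccontr)
    assume contra: "\<not> (\<exists>a\<in>M. W0 \<subseteq> a \<union> W)"
    define N where "N = {U\<in>Om. \<exists>a\<in>M. U \<subseteq> a \<union> W}"
    have "N \<in> Idl Om" unfolding N_def using Idl_adjoin M(1) by simp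
    moreover have "M \<subseteq> N" unfolding N_def using IdlD(1)[OF M(1)] by auto
    moreover have "W0 \<notin> N" using contra unfolding N_def by auto
    ultimately have "N = M" by (rule maximal)
    moreover have "W \<in> N" unfolding N_def using \<open>W \<in> Om\<close> Idl_empty[OF M(1)] by auto
    ultimately show False using \<open>W \<notin> M\<close> by simp
  qed
  show ?thesis
  proof (rule prime_filterI)
    have "X \<notin> M" using IdlD(3)[OF M(1) _ W0 Om_subset[OF W0]] M(2) by auto
    then show "X \<in> Om - M" using Om_topspace by simp
    show "{} \<notin> Om - M" using Idl_empty[OF M(1)] by simp
    show "V \<in> Om - M" if "U \<in> Om - M" "V \<in> Om" "U \<subseteq> V" for U V
      using that IdlD(3)[OF M(1)] by auto
    show "U \<in> Om - M \<or> V \<in> Om - M" if "U \<in> Om" "V \<in> Om" "U \<union> V \<in> Om - M" for U V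
      using that Idl_Un[OF M(1)] by auto
    show "U \<inter> V \<in> Om - M" if UV: "U \<in> Om - M" "V \<in> Om - M" for U V
    proof (rule ccontr)
      assume "U \<inter> V \<notin> Om - M"
      then have "U \<inter> V \<in> M" using UV Om_Int by auto
      obtain a1 a2 where "a1 \<in> M" "W0 \<subseteq> a1 \<union> U" "a2 \<in> M" "W0 \<subseteq> a2 \<union> V"
        using absorb UV by (meson DiffE)
      then have "W0 \<subseteq> (a1 \<union> a2) \<union> (U \<inter> V)" "(a1 \<union> a2) \<union> (U \<inter> V) \<in> M"
        using Idl_Un[OF M(1)] \<open>U \<inter> V \<in> M\<close> by auto
      then show False using IdlD(3)[OF M(1)] W0 M(2) by auto
    qed
  qed auto
qed

lemma prime_filter_separation:
  assumes "W0 \<in> Om" "K \<in> Idl Om" "W0 \<notin> K"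
  obtains P where "prime_filter P" "W0 \<in> P" "P \<inter> K = {}"
proof -
  obtain M where M: "M \<in> Idl Om" "K \<subseteq> M" "W0 \<notin> M"
    "\<And>N. N \<in> Idl Om \<Longrightarrow> M \<subseteq> N \<Longrightarrow> W0 \<notin> N \<Longrightarrow> N = M"
    using maximal_ideal_avoiding[OF assms(2,3)] by blast
  have "prime_filter (Om - M)" by (rule prime_filter_complement[OF assms(1) M(1,3,4)])
  moreover have "W0 \<in> Om - M" "(Om - M) \<inter> K = {}" using assms(1) M(2,3) by auto
  ultimately show ?thesis using that by simp
qed

lemma Xhat_compact:
  assumes W0: "W0 \<in> Om" and C: "C \<subseteq> Om"
    and cover: "\<And>F. F \<in> Xhat Om \<Longrightarrow> W0 \<in> opens_at F \<Longrightarrow> \<exists>V\<in>C. V \<in> opens_at F"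
  obtains C' where "finite C'" "C' \<subseteq> C" "W0 \<subseteq> \<Union>C'"
proof -
  have "W0 \<in> finite_cover_ideal C"
  proof (rule ccontr)
    assume "W0 \<notin> finite_cover_ideal C"
    then obtain P where P: "prime_filter P" "W0 \<in> P" "P \<inter> finite_cover_ideal C = {}"
      using prime_filter_separation[OF W0 finite_cover_ideal_Idl] by blast
    then obtain V where "V \<in> C" "V \<in> P"
      using cover[OF point_of_Xhat[OF P(1)]] opens_at_point_of[OF P(1)] by auto
    then show False using P(3) mem_finite_cover_ideal[OF _ C] by auto
  qed
  then show ?thesis using that unfolding finite_cover_ideal_def by auto
qed

lemma Xhat_compact_choice:
  assumes W0: "W0 \<in> Om"
    and local: "\<And>F. F \<in> Xhat Om \<Longrightarrow> W0 \<in> opens_at F \<Longrightarrow> \<exists>V\<in>opens_at F. \<exists>g. Q V g"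
  obtains C' g where "finite C'" "C' \<subseteq> Om" "W0 \<subseteq> \<Union>C'" "\<forall>V\<in>C'. Q V (g V)"
proof -
  define C where "C = {V\<in>Om. \<exists>g. Q V g}"
  have "\<exists>V\<in>C. V \<in> opens_at F" if "F \<in> Xhat Om" "W0 \<in> opens_at F" for F
    using local[OF that] opens_at_subset unfolding C_def by auto
  moreover have "C \<subseteq> Om" unfolding C_def by auto
  ultimately obtain C' where C': "finite C'" "C' \<subseteq> C" "W0 \<subseteq> \<Union>C'"
    using Xhat_compact[OF W0] by metis
  then have "\<forall>V\<in>C'. \<exists>g. Q V g" unfolding C_def by auto
  from bchoice[OF this] obtain g where g: "\<forall>V\<in>C'. Q V (g V)" ..
  have "C' \<subseteq> Om" using C'(2) unfolding C_def by auto
  then show ?thesis by (rule that[OF C'(1) _ C'(3) g])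
qed

lemma opens_at_realized:
  assumes F: "F \<in> Xhat Om" and Us: "finite Us" "Us \<subseteq> Om" and W0: "W0 \<in> opens_at F"
  shows "\<exists>x\<in>W0. \<forall>U\<in>Us. x \<in> U \<longleftrightarrow> U \<in> opens_at F"
proof -
  let ?P = "opens_at F"
  have P: "prime_filter ?P" by (rule prime_filter_opens_at[OF F])
  have "finite (insert W0 (Us \<inter> ?P))" "insert W0 (Us \<inter> ?P) \<subseteq> ?P" using Us W0 by auto
  then have inter: "X \<inter> \<Inter>(insert W0 (Us \<inter> ?P)) \<in> ?P" by (rule prime_filter_Inter[OF P])
  have "finite (Us - ?P)" "Us - ?P \<subseteq> Om" using Us by auto
  then have "\<Union>(Us - ?P) \<in> Om" "\<Union>(Us - ?P) \<notin> ?P"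
    using Om_Union prime_filter_Union[OF P] by auto
  then have "\<not> X \<inter> \<Inter>(insert W0 (Us \<inter> ?P)) \<subseteq> \<Union>(Us - ?P)"
    using prime_filterD(4)[OF P inter] by auto
  then obtain x where "x \<in> W0" "x \<in> \<Inter>(Us \<inter> ?P)" "x \<notin> \<Union>(Us - ?P)" by auto
  then show ?thesis by auto
qed

lemma opens_at_point:
  assumes "x \<in> X"
  obtains F where "F \<in> Xhat Om" "opens_at F = {W\<in>Om. x \<in> W}"
proof -
  have "prime_filter {W\<in>Om. x \<in> W}"
    by (rule prime_filterI) (use assms Om_topspace Om_Int in auto)
  then show ?thesis using that point_of_Xhat opens_at_point_of by blast
qed

lemma cont_fun_space_nbhd:
  assumes f: "f \<in> cont_fun_space Om" and U: "scott_open U" and F: "F \<in> Xhat Om" "f F \<in> U"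
  shows "\<exists>V\<in>opens_at F. \<forall>G\<in>Xhat Om. V \<in> opens_at G \<longrightarrow> f G \<in> U"
proof -
  obtain J where J: "J \<in> Idl Om" "{y \<in> Xhat Om. f y \<in> U} = OI Om J"
    using f U unfolding cont_fun_space_def by blast
  then have "J \<in> F" using F unfolding OI_def by auto
  then obtain V where "V \<in> J" "V \<in> opens_at F" using mem_Xhat_iff[OF F(1) J(1)] by auto
  moreover have "f G \<in> U" if "G \<in> Xhat Om" "V \<in> opens_at G" for G
    using that \<open>V \<in> J\<close> mem_Xhat_iff[OF _ J(1)] J(2) unfolding OI_def by auto
  ultimately show ?thesis by auto
qed

lemma Xhat_locally_basic_OI:
  assumes Q: "\<And>F. F \<in> Xhat Om \<Longrightarrow> Q F \<Longrightarrow> \<exists>V\<in>opens_at F. \<forall>G\<in>Xhat Om. V \<in> opens_at G \<longrightarrow> Q G"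
  shows "\<exists>J\<in>Idl Om. {F \<in> Xhat Om. Q F} = OI Om J"
proof -
  define J where "J = {W\<in>Om. \<forall>G\<in>Xhat Om. W \<in> opens_at G \<longrightarrow> Q G}"
  have "J \<in> Idl Om"
  proof (rule IdlI)
    show "J \<subseteq> Om" unfolding J_def by auto
    have "{} \<in> J" unfolding J_def using Om_empty prime_filterD(3)[OF prime_filter_opens_at] by auto
    then show "J \<noteq> {}" by auto
    show "b \<in> J" if ab: "a \<in> J" "b \<in> Om" "b \<subseteq> a" for a b
    proof -
      have "a \<in> opens_at G" if "G \<in> Xhat Om" "b \<in> opens_at G" for G
        using prime_filterD(4)[OF prime_filter_opens_at[OF that(1)] that(2)] ab unfolding J_def by auto
      then show ?thesis using ab unfolding J_def by auto
    qed
    show "\<exists>c\<in>J. a \<subseteq> c \<and> b \<subseteq> c" if ab: "a \<in> J" "b \<in> J" for a b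
    proof -
      have "a \<in> opens_at G \<or> b \<in> opens_at G" if "G \<in> Xhat Om" "a \<union> b \<in> opens_at G" for G
        using prime_filterD(6)[OF prime_filter_opens_at[OF that(1)] _ _ that(2)] ab unfolding J_def by auto
      then have "a \<union> b \<in> J" using ab Om_Un unfolding J_def by blast
      then show ?thesis by auto
    qed
  qed
  moreover have "{F \<in> Xhat Om. Q F} = OI Om J"
  proof (intro set_eqI iffI)
    fix F assume "F \<in> {F \<in> Xhat Om. Q F}"
    then obtain V where "F \<in> Xhat Om" "V \<in> opens_at F" "\<forall>G\<in>Xhat Om. V \<in> opens_at G \<longrightarrow> Q G"
      using Q by auto
    moreover from this have "V \<in> J" unfolding J_def using opens_at_subset by auto
    ultimately show "F \<in> OI Om J" using mem_Xhat_iff \<open>J \<in> Idl Om\<close> unfolding OI_def by auto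
  next
    fix F assume "F \<in> OI Om J"
    then obtain W where "F \<in> Xhat Om" "W \<in> J" "W \<in> opens_at F"
      using mem_Xhat_iff \<open>J \<in> Idl Om\<close> unfolding OI_def by auto
    then show "F \<in> {F \<in> Xhat Om. Q F}" unfolding J_def by auto
  qed
  ultimately show ?thesis by auto
qed

end

locale step_functions = bc_domain_basis D0 + viable T Om
  for D0 :: "'b::order set" and T :: "'a topology" and Om :: "'a set set"
begin

abbreviation "rep \<equiv> is_rep T Om D0"

lemma repD:
  assumes "rep I b Ob h"
  shows "finite I" "consistent_family I b Ob" "\<And>i. i \<in> I \<Longrightarrow> Ob i \<in> Om" "\<And>i. i \<in> I \<Longrightarrow> b i \<in> D0"
    "h = step_join X I b Ob"
  using assms unfolding is_rep_def by auto

lemma is_lub_step_join: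
  assumes R: "rep I b Ob h" and x: "x \<in> X"
  shows "is_lub {b i |i. i \<in> I \<and> x \<in> Ob i} (h x)"
proof -
  let ?J = "{i\<in>I. x \<in> Ob i}"
  have "?J \<subseteq> I" "(\<Inter>j\<in>?J. Ob j) \<noteq> {}" by auto
  then have "\<exists>u. \<forall>j\<in>?J. b j \<le> u"
    by (rule repD(2)[OF R, unfolded consistent_family_def, rule_format])
  then obtain u where "\<forall>j\<in>?J. b j \<le> u" ..
  then obtain z where z: "is_lub {b i |i. i \<in> I \<and> x \<in> Ob i} z"
    using bounded_has_lub[of "{b i |i. i \<in> I \<and> x \<in> Ob i}" u] by auto
  have "h x = lub {b i |i. i \<in> I \<and> x \<in> Ob i}" using repD(5)[OF R] x unfolding step_join_def by simp
  then show ?thesis using lub_eqI[OF z] z by simp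
qed

lemma step_join_realized:
  assumes R: "rep I b Ob h" and F: "F \<in> Xhat Om" and W0: "W0 \<in> opens_at F"
  obtains x where "x \<in> W0" "x \<in> X" "is_lub {b i |i. i \<in> I \<and> Ob i \<in> opens_at F} (h x)"
proof -
  have fin: "finite (Ob ` I)" and sub: "Ob ` I \<subseteq> Om" using repD(1,3)[OF R] by auto
  obtain x where x: "x \<in> W0" "\<forall>U\<in>Ob ` I. x \<in> U \<longleftrightarrow> U \<in> opens_at F"
    using opens_at_realized[OF F fin sub W0] by auto
  have "W0 \<in> Om" using W0 opens_at_subset by auto
  then have "x \<in> X" using x(1) Om_subset by auto
  moreover have eq: "{b i |i. i \<in> I \<and> x \<in> Ob i} = {b i |i. i \<in> I \<and> Ob i \<in> opens_at F}"
    using x(2) by auto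
  ultimately have "is_lub {b i |i. i \<in> I \<and> Ob i \<in> opens_at F} (h x)"
    using is_lub_step_join[OF R] by (simp flip: eq)
  then show ?thesis using that x(1) \<open>x \<in> X\<close> by simp
qed

lemma step_join_nbhd:
  assumes R: "rep I b Ob h" and F: "F \<in> Xhat Om"
  obtains V where "V \<in> opens_at F"
    "\<And>y. y \<in> V \<Longrightarrow> y \<in> X \<and> {b i |i. i \<in> I \<and> Ob i \<in> opens_at F} \<subseteq> {b i |i. i \<in> I \<and> y \<in> Ob i}"
    "\<And>G. G \<in> Xhat Om \<Longrightarrow> V \<in> opens_at G \<Longrightarrow>
       {b i |i. i \<in> I \<and> Ob i \<in> opens_at F} \<subseteq> {b i |i. i \<in> I \<and> Ob i \<in> opens_at G}"
proof
  define V where "V = X \<inter> \<Inter>(Ob ` I \<inter> opens_at F)"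
  have "finite (Ob ` I \<inter> opens_at F)" using repD(1)[OF R] by auto
  then show "V \<in> opens_at F"
    unfolding V_def using prime_filter_Inter[OF prime_filter_opens_at[OF F]] by simp
  show "y \<in> X \<and> {b i |i. i \<in> I \<and> Ob i \<in> opens_at F} \<subseteq> {b i |i. i \<in> I \<and> y \<in> Ob i}"
    if "y \<in> V" for y
    using that unfolding V_def by auto
  have "Ob i \<in> opens_at G" if "G \<in> Xhat Om" "V \<in> opens_at G" "i \<in> I" "Ob i \<in> opens_at F" for G i
  proof -
    have "V \<subseteq> Ob i" unfolding V_def using that(3,4) by auto
    then show ?thesis
      using prime_filterD(4)[OF prime_filter_opens_at[OF that(1)] that(2) repD(3)[OF R that(3)]] by simp
  qed
  then show "{b i |i. i \<in> I \<and> Ob i \<in> opens_at F} \<subseteq> {b i |i. i \<in> I \<and> Ob i \<in> opens_at G}"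
    if "G \<in> Xhat Om" "V \<in> opens_at G" for G
    using that by auto
qed

lemma step_join_mono:
  assumes R: "rep I b Ob h" and R': "rep I' b' Ob' k"
    and sub: "(\<lambda>i. (b i, Ob i)) ` I \<subseteq> (\<lambda>i. (b' i, Ob' i)) ` I'" and x: "x \<in> X"
  shows "h x \<le> k x"
proof (rule is_lub_least[OF is_lub_step_join[OF R x]])
  fix s assume "s \<in> {b i |i. i \<in> I \<and> x \<in> Ob i}"
  then obtain i where i: "i \<in> I" "x \<in> Ob i" "s = b i" by auto
  then have "(b i, Ob i) \<in> (\<lambda>i. (b' i, Ob' i)) ` I'" using sub by auto
  then obtain j where "j \<in> I'" "b' j = b i" "Ob' j = Ob i" by auto
  then have "s = b' j" "j \<in> I'" "x \<in> Ob' j" using i by simp_all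
  then show "s \<le> k x" using is_lub_upper[OF is_lub_step_join[OF R' x], of "b' j"] by blast
qed

definition ext_step :: "('a \<Rightarrow> 'b) \<Rightarrow> 'a set set set \<Rightarrow> 'b" where
  "ext_step h F = lub {v. \<exists>W\<in>opens_at F. \<forall>x\<in>W. v \<le> h x}"

lemma is_lub_ext_step:
  assumes R: "rep I b Ob h" and F: "F \<in> Xhat Om"
  shows "is_lub {b i |i. i \<in> I \<and> Ob i \<in> opens_at F} (ext_step h F)"
proof -
  let ?S = "{b i |i. i \<in> I \<and> Ob i \<in> opens_at F}"
  have X: "X \<in> opens_at F" using prime_filterD(2)[OF prime_filter_opens_at[OF F]] .
  obtain x0 where "x0 \<in> X" and val: "is_lub ?S (h x0)" by (rule step_join_realized[OF R F X])
  have "is_lub {v. \<exists>W\<in>opens_at F. \<forall>x\<in>W. v \<le> h x} (h x0)"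
    unfolding is_lub_iff
  proof (intro conjI allI impI ballI)
    fix v assume "v \<in> {v. \<exists>W\<in>opens_at F. \<forall>x\<in>W. v \<le> h x}"
    then obtain W where W: "W \<in> opens_at F" "\<forall>x\<in>W. v \<le> h x" by auto
    obtain x where "x \<in> W" "x \<in> X" "is_lub ?S (h x)" by (rule step_join_realized[OF R F W(1)])
    then have "h x = h x0" using is_lub_unique[OF _ val] by simp
    then show "v \<le> h x0" using W(2) \<open>x \<in> W\<close> by auto
  next
    fix u assume ub: "\<forall>v\<in>{v. \<exists>W\<in>opens_at F. \<forall>x\<in>W. v \<le> h x}. v \<le> u"
    obtain V where V: "V \<in> opens_at F"
      "\<And>y. y \<in> V \<Longrightarrow> y \<in> X \<and> ?S \<subseteq> {b i |i. i \<in> I \<and> y \<in> Ob i}"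
      "\<And>G. G \<in> Xhat Om \<Longrightarrow> V \<in> opens_at G \<Longrightarrow>
         ?S \<subseteq> {b i |i. i \<in> I \<and> Ob i \<in> opens_at G}"
      using step_join_nbhd[OF R F] by blast
    have "h x0 \<le> h y" if "y \<in> V" for y
      using V(2)[OF that] is_lub_mono[OF val is_lub_step_join[OF R]] by simp
    then have "h x0 \<in> {v. \<exists>W\<in>opens_at F. \<forall>x\<in>W. v \<le> h x}" using V(1) by auto
    then show "h x0 \<le> u" using ub by simp
  qed
  then show ?thesis using val unfolding ext_step_def by (simp add: lub_eqI)
qed

lemma ext_step_attained:
  assumes R: "rep I b Ob h" and F: "F \<in> Xhat Om" and W0: "W0 \<in> opens_at F"
  obtains x where "x \<in> W0" "x \<in> X" "h x = ext_step h F"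
proof -
  obtain x where x: "x \<in> W0" "x \<in> X" "is_lub {b i |i. i \<in> I \<and> Ob i \<in> opens_at F} (h x)"
    by (rule step_join_realized[OF R F W0])
  have "h x = ext_step h F" by (rule is_lub_unique[OF x(3) is_lub_ext_step[OF R F]])
  with x(1,2) show ?thesis by (rule that)
qed

lemma ext_step_nbhd:
  assumes R: "rep I b Ob h" and F: "F \<in> Xhat Om"
  obtains V where "V \<in> opens_at F" "\<And>x. x \<in> V \<Longrightarrow> ext_step h F \<le> h x"
    "\<And>G. G \<in> Xhat Om \<Longrightarrow> V \<in> opens_at G \<Longrightarrow> ext_step h F \<le> ext_step h G"
proof -
  obtain V where V: "V \<in> opens_at F"
    "\<And>y. y \<in> V \<Longrightarrow> y \<in> X \<and> {b i |i. i \<in> I \<and> Ob i \<in> opens_at F} \<subseteq> {b i |i. i \<in> I \<and> y \<in> Ob i}"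
    "\<And>G. G \<in> Xhat Om \<Longrightarrow> V \<in> opens_at G \<Longrightarrow>
       {b i |i. i \<in> I \<and> Ob i \<in> opens_at F} \<subseteq> {b i |i. i \<in> I \<and> Ob i \<in> opens_at G}"
    using step_join_nbhd[OF R F] by blast
  show ?thesis
  proof (rule that[OF V(1)])
    show "ext_step h F \<le> h x" if "x \<in> V" for x
      using V(2)[OF that] is_lub_mono[OF is_lub_ext_step[OF R F] is_lub_step_join[OF R]] by simp
    show "ext_step h F \<le> ext_step h G" if "G \<in> Xhat Om" "V \<in> opens_at G" for G
      using V(3)[OF that] is_lub_mono[OF is_lub_ext_step[OF R F] is_lub_ext_step[OF R that(1)]] by simp
  qed
qed

definition step_single :: "'b \<Rightarrow> 'a set \<Rightarrow> 'a \<Rightarrow> 'b" where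
  "step_single a V = step_join X {0} (\<lambda>_. a) (\<lambda>_. V)"

lemma step_single_rep: "a \<in> D0 \<Longrightarrow> V \<in> Om \<Longrightarrow> rep {0} (\<lambda>_. a) (\<lambda>_. V) (step_single a V)"
  unfolding is_rep_def step_single_def consistent_family_def by auto

lemma step_single_value:
  assumes "a \<in> D0" "V \<in> Om" "x \<in> V"
  shows "step_single a V x = a"
proof -
  have "x \<in> X" using Om_subset assms(2,3) by auto
  moreover have "{(\<lambda>_. a) i |i. i \<in> {0::nat} \<and> x \<in> V} = {a}" using assms(3) by auto
  ultimately show ?thesis
    using is_lub_step_join[OF step_single_rep[OF assms(1,2)]] is_lub_singleton_eq by metis
qed

lemma ext_step_single:
  assumes "a \<in> D0" "V \<in> Om" "F \<in> Xhat Om" "V \<in> opens_at F"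
  shows "ext_step (step_single a V) F = a"
proof -
  have "{(\<lambda>_. a) i |i. i \<in> {0::nat} \<and> V \<in> opens_at F} = {a}" using assms(4) by auto
  then show ?thesis
    using is_lub_ext_step[OF step_single_rep[OF assms(1,2)] assms(3)] is_lub_singleton_eq by metis
qed

definition step_empty :: "'a \<Rightarrow> 'b" where
  "step_empty = step_join X {} (\<lambda>_. undefined) (\<lambda>_. {})"

lemma step_empty_rep: "rep {} (\<lambda>_. undefined) (\<lambda>_. {}) step_empty"
  unfolding is_rep_def step_empty_def consistent_family_def by auto

abbreviation "step_prec \<equiv> prec T Om D0"

lemma step_precI:
  assumes R: "rep I b Ob h'" and wb: "\<And>i x. i \<in> I \<Longrightarrow> x \<in> Ob i \<Longrightarrow> b i \<lless> h x"
  shows "step_prec h' h"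
proof -
  have "\<forall>i\<in>I. Ob i \<subseteq> {x \<in> X. b i \<lless> h x}"
  proof
    fix i assume "i \<in> I"
    then show "Ob i \<subseteq> {x \<in> X. b i \<lless> h x}" using wb Om_subset[OF repD(3)[OF R \<open>i \<in> I\<close>]] by auto
  qed
  with R show ?thesis unfolding prec_def by blast
qed

lemma step_prec_le:
  assumes "step_prec h' h" "x \<in> X"
  shows "h' x \<le> h x"
proof -
  obtain I b Ob where R: "rep I b Ob h'" and wb: "\<forall>i\<in>I. Ob i \<subseteq> {x \<in> X. b i \<lless> h x}"
    using assms(1) unfolding prec_def by blast
  show ?thesis
  proof (rule is_lub_least[OF is_lub_step_join[OF R assms(2)]])
    fix s assume "s \<in> {b i |i. i \<in> I \<and> x \<in> Ob i}"
    then show "s \<le> h x" using wb way_below_imp_le by auto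
  qed
qed

lemma step_prec_ext_step:
  assumes "step_prec h' h" "h \<in> Babs T Om D0"
  obtains I b Ob where "rep I b Ob h'"
    "\<forall>i\<in>I. \<forall>F\<in>Xhat Om. Ob i \<in> opens_at F \<longrightarrow> b i \<lless> ext_step h F"
proof -
  obtain I b Ob where R: "rep I b Ob h'" and wb: "\<forall>i\<in>I. Ob i \<subseteq> {x \<in> X. b i \<lless> h x}"
    using assms(1) unfolding prec_def by blast
  obtain I2 b2 Ob2 where R2: "rep I2 b2 Ob2 h" using assms(2) unfolding Babs_def by blast
  have "b i \<lless> ext_step h F" if iF: "i \<in> I" "F \<in> Xhat Om" "Ob i \<in> opens_at F" for i F
  proof -
    obtain x where "x \<in> Ob i" "x \<in> X" "h x = ext_step h F" by (rule ext_step_attained[OF R2 iF(2,3)])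
    then show ?thesis using wb iF(1) by force
  qed
  then show ?thesis using that[OF R] by blast
qed

lemma step_prec_ext_step_le:
  assumes "step_prec h' h" "h \<in> Babs T Om D0" "F \<in> Xhat Om"
  shows "ext_step h' F \<le> ext_step h F"
proof -
  obtain I b Ob where R: "rep I b Ob h'"
    and wb: "\<forall>i\<in>I. \<forall>F\<in>Xhat Om. Ob i \<in> opens_at F \<longrightarrow> b i \<lless> ext_step h F"
    by (rule step_prec_ext_step[OF assms(1,2)])
  show ?thesis
  proof (rule is_lub_least[OF is_lub_ext_step[OF R assms(3)]])
    fix s assume "s \<in> {b i |i. i \<in> I \<and> Ob i \<in> opens_at F}"
    then show "s \<le> ext_step h F" using wb assms(3) way_below_imp_le by blast
  qed
qed

abbreviation "RIC \<equiv> rounded_ideal_completion T Om D0"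
abbreviation "CF \<equiv> (cont_fun_space Om :: ('a set set set \<Rightarrow> 'b) set)"

lemma RICD:
  assumes "R \<in> RIC"
  shows "R \<subseteq> Babs T Om D0" "R \<noteq> {}"
    "\<And>h h'. h \<in> R \<Longrightarrow> h' \<in> Babs T Om D0 \<Longrightarrow> step_prec h' h \<Longrightarrow> h' \<in> R"
    "\<And>h1 h2. h1 \<in> R \<Longrightarrow> h2 \<in> R \<Longrightarrow> \<exists>h\<in>R. step_prec h1 h \<and> step_prec h2 h"
proof -
  note ric = assms[unfolded rounded_ideal_completion_def mem_Collect_eq]
  show "R \<subseteq> Babs T Om D0" using ric by (rule conjunct1)
  show "R \<noteq> {}" using ric by blast
  show "\<And>h h'. h \<in> R \<Longrightarrow> h' \<in> Babs T Om D0 \<Longrightarrow> step_prec h' h \<Longrightarrow> h' \<in> R" using ric by blast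
  show "\<And>h1 h2. h1 \<in> R \<Longrightarrow> h2 \<in> R \<Longrightarrow> \<exists>h\<in>R. step_prec h1 h \<and> step_prec h2 h" using ric by blast
qed

lemma RICI:
  assumes "R \<subseteq> Babs T Om D0" "R \<noteq> {}"
    "\<And>h h'. h \<in> R \<Longrightarrow> step_prec h' h \<Longrightarrow> h' \<in> R"
    "\<And>h1 h2. h1 \<in> R \<Longrightarrow> h2 \<in> R \<Longrightarrow> \<exists>h\<in>R. step_prec h1 h \<and> step_prec h2 h"
  shows "R \<in> RIC"
  unfolding rounded_ideal_completion_def using assms by (intro CollectI conjI ballI impI) auto

lemma RIC_rep:
  assumes "R \<in> RIC" "h \<in> R"
  obtains I b Ob where "rep I b Ob h"
  using assms RICD(1) unfolding Babs_def by blast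

definition fun_of_ideal :: "('a \<Rightarrow> 'b) set \<Rightarrow> 'a set set set \<Rightarrow> 'b" where
  "fun_of_ideal R = (\<lambda>F. if F \<in> Xhat Om then lub {ext_step h F | h. h \<in> R} else undefined)"

lemma directed_ext_step_image:
  assumes R: "R \<in> RIC" and F: "F \<in> Xhat Om"
  shows "directed {ext_step h F | h. h \<in> R}"
  unfolding directed_def
proof (intro conjI ballI)
  show "{ext_step h F | h. h \<in> R} \<noteq> {}" using RICD(2)[OF R] by blast
  fix x y assume "x \<in> {ext_step h F | h. h \<in> R}" "y \<in> {ext_step h F | h. h \<in> R}"
  then obtain h1 h2 where h: "h1 \<in> R" "h2 \<in> R" "x = ext_step h1 F" "y = ext_step h2 F" by blast
  then obtain h where "h \<in> R" "step_prec h1 h" "step_prec h2 h" using RICD(4)[OF R] by blast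
  moreover have "h \<in> Babs T Om D0" using \<open>h \<in> R\<close> RICD(1)[OF R] by auto
  ultimately have "x \<le> ext_step h F" "y \<le> ext_step h F" using step_prec_ext_step_le F h(3,4) by auto
  then show "\<exists>z\<in>{ext_step h F | h. h \<in> R}. x \<le> z \<and> y \<le> z" using \<open>h \<in> R\<close> by blast
qed

lemma is_lub_fun_of_ideal:
  assumes R: "R \<in> RIC" and F: "F \<in> Xhat Om"
  shows "is_lub {ext_step h F | h. h \<in> R} (fun_of_ideal R F)"
proof -
  obtain z where z: "is_lub {ext_step h F | h. h \<in> R} z"
    using directed_has_lub[OF directed_ext_step_image[OF R F]] by blast
  then show ?thesis unfolding fun_of_ideal_def using F lub_eqI[OF z] by simp
qed

lemma fun_of_ideal_cont:
  assumes R: "R \<in> RIC"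
  shows "fun_of_ideal R \<in> CF"
  unfolding cont_fun_space_def
proof (intro CollectI conjI allI impI)
  show "fun_of_ideal R \<in> extensional (Xhat Om)" unfolding extensional_def fun_of_ideal_def by auto
  fix U :: "'b set" assume U: "scott_open U"
  show "\<exists>I\<in>Idl Om. {y \<in> Xhat Om. fun_of_ideal R y \<in> U} = OI Om I"
  proof (rule Xhat_locally_basic_OI)
    fix F assume F: "F \<in> Xhat Om" and "fun_of_ideal R F \<in> U"
    then obtain h where h: "h \<in> R" "ext_step h F \<in> U"
      using U directed_ext_step_image[OF R F] is_lub_fun_of_ideal[OF R F]
      unfolding scott_open_def by blast
    obtain I b Ob where "rep I b Ob h" by (rule RIC_rep[OF R h(1)])
    then obtain V where V: "V \<in> opens_at F"
      "\<And>G. G \<in> Xhat Om \<Longrightarrow> V \<in> opens_at G \<Longrightarrow> ext_step h F \<le> ext_step h G"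
      using ext_step_nbhd F by metis
    have "fun_of_ideal R G \<in> U" if "G \<in> Xhat Om" "V \<in> opens_at G" for G
    proof -
      have "ext_step h F \<le> fun_of_ideal R G"
        using V(2)[OF that] is_lub_upper[OF is_lub_fun_of_ideal[OF R that(1)]] h(1) order_trans by blast
      then show ?thesis using U h(2) unfolding scott_open_def by blast
    qed
    then show "\<exists>V\<in>opens_at F. \<forall>G\<in>Xhat Om. V \<in> opens_at G \<longrightarrow> fun_of_ideal R G \<in> U"
      using V(1) by blast
  qed
qed

(* The inverse of fun_of_ideal: step functions whose generators are way below f throughout their opens. *)
definition approximants :: "('a set set set \<Rightarrow> 'b) \<Rightarrow> ('a \<Rightarrow> 'b) set" where
  "approximants f = {h. \<exists>I b Ob. rep I b Ob h
     \<and> (\<forall>i\<in>I. \<forall>F\<in>Xhat Om. Ob i \<in> opens_at F \<longrightarrow> b i \<lless> f F)}"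

lemma approximantsI:
  assumes "rep I b Ob h" "\<And>i F. i \<in> I \<Longrightarrow> F \<in> Xhat Om \<Longrightarrow> Ob i \<in> opens_at F \<Longrightarrow> b i \<lless> f F"
  shows "h \<in> approximants f"
  unfolding approximants_def using assms by blast

lemma approximantsE:
  assumes "h \<in> approximants f"
  obtains I b Ob where "rep I b Ob h" "\<forall>i\<in>I. \<forall>F\<in>Xhat Om. Ob i \<in> opens_at F \<longrightarrow> b i \<lless> f F"
  using assms unfolding approximants_def by blast

lemma approximants_subset_Babs: "approximants f \<subseteq> Babs T Om D0"
  unfolding approximants_def Babs_def by auto

lemma ext_step_le_if_approximant:
  assumes "h \<in> approximants f" "F \<in> Xhat Om"
  shows "ext_step h F \<le> f F"
proof -
  obtain I b Ob where R: "rep I b Ob h"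
    and wb: "\<forall>i\<in>I. \<forall>F\<in>Xhat Om. Ob i \<in> opens_at F \<longrightarrow> b i \<lless> f F"
    by (rule approximantsE[OF assms(1)])
  show ?thesis
  proof (rule is_lub_least[OF is_lub_ext_step[OF R assms(2)]])
    fix s assume "s \<in> {b i |i. i \<in> I \<and> Ob i \<in> opens_at F}"
    then show "s \<le> f F" using wb assms(2) way_below_imp_le by blast
  qed
qed

lemma step_single_approximant:
  assumes "c \<in> D0" "V \<in> Om" "\<And>G. G \<in> Xhat Om \<Longrightarrow> V \<in> opens_at G \<Longrightarrow> c \<lless> f G"
  shows "step_single c V \<in> approximants f"
  by (rule approximantsI[OF step_single_rep[OF assms(1,2)]]) (use assms(3) in auto)

lemma fun_of_ideal_approximants:
  assumes f: "f \<in> CF"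
  shows "fun_of_ideal (approximants f) = f"
proof
  fix F show "fun_of_ideal (approximants f) F = f F"
  proof (cases "F \<in> Xhat Om")
    case False
    then show ?thesis using f unfolding cont_fun_space_def fun_of_ideal_def extensional_def by auto
  next
    case F: True
    have "is_lub {ext_step h F | h. h \<in> approximants f} (f F)"
      unfolding is_lub_iff
    proof (intro conjI allI impI ballI)
      fix s assume "s \<in> {ext_step h F | h. h \<in> approximants f}"
      then show "s \<le> f F" using ext_step_le_if_approximant F by blast
    next
      fix u assume ub: "\<forall>s\<in>{ext_step h F | h. h \<in> approximants f}. s \<le> u"
      have "a \<le> u" if a: "a \<in> D0" "a \<lless> f F" for a
      proof -
        obtain V where V: "V \<in> opens_at F" "\<forall>G\<in>Xhat Om. V \<in> opens_at G \<longrightarrow> f G \<in> {z. a \<lless> z}"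
          using cont_fun_space_nbhd[OF f scott_open_way_above F] a(2) by blast
        have "V \<in> Om" using V(1) opens_at_subset by auto
        then have "step_single a V \<in> approximants f" "ext_step (step_single a V) F = a"
          using step_single_approximant[OF a(1)] V ext_step_single[OF a(1) _ F V(1)] by auto
        then show "a \<le> u" using ub by force
      qed
      then show "f F \<le> u" using is_lub_least[OF basis_lub[of "f F"]] by blast
    qed
    then show ?thesis unfolding fun_of_ideal_def using F lub_eqI by simp
  qed
qed

lemma consistent_family_if_way_below:
  assumes O: "\<And>j. j \<in> I \<Longrightarrow> Ob j \<in> Om"
    and wb: "\<And>j F. j \<in> I \<Longrightarrow> F \<in> Xhat Om \<Longrightarrow> Ob j \<in> opens_at F \<Longrightarrow> b j \<lless> f F"
  shows "consistent_family I b Ob"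
  unfolding consistent_family_def
proof (intro allI impI)
  fix J assume J: "J \<subseteq> I" "(\<Inter>j\<in>J. Ob j) \<noteq> {}"
  show "\<exists>u. \<forall>j\<in>J. b j \<le> u"
  proof (cases "J = {}")
    case True
    then show ?thesis by blast
  next
    case False
    then obtain j0 where "j0 \<in> J" by blast
    obtain x where x: "x \<in> (\<Inter>j\<in>J. Ob j)" using J(2) by blast
    then have "x \<in> X" using \<open>j0 \<in> J\<close> J(1) O Om_subset by blast
    then obtain F where F: "F \<in> Xhat Om" "opens_at F = {W\<in>Om. x \<in> W}" by (rule opens_at_point)
    have "b j \<le> f F" if "j \<in> J" for j
    proof -
      have "Ob j \<in> opens_at F" using F(2) x that J(1) O by auto
      then show ?thesis using wb that J(1) F(1) way_below_imp_le by blast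
    qed
    then show ?thesis by blast
  qed
qed

lemma approximants_join:
  assumes h1: "h1 \<in> approximants f" and h2: "h2 \<in> approximants f"
  obtains k where "k \<in> approximants f" "\<forall>x\<in>X. h1 x \<le> k x \<and> h2 x \<le> k x"
proof -
  obtain I1 b1 O1 where R1: "rep I1 b1 O1 h1"
    and wb1: "\<forall>i\<in>I1. \<forall>F\<in>Xhat Om. O1 i \<in> opens_at F \<longrightarrow> b1 i \<lless> f F"
    by (rule approximantsE[OF h1])
  obtain I2 b2 O2 where R2: "rep I2 b2 O2 h2"
    and wb2: "\<forall>i\<in>I2. \<forall>F\<in>Xhat Om. O2 i \<in> opens_at F \<longrightarrow> b2 i \<lless> f F"
    by (rule approximantsE[OF h2])
  define I where "I = interleave_index I1 I2"
  define b where "b = interleave b1 b2"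
  define Ob where "Ob = interleave O1 O2"
  have I: "finite I" unfolding I_def using finite_interleave_index repD(1)[OF R1] repD(1)[OF R2] by blast
  have pairs: "(\<lambda>i. (b i, Ob i)) ` I = (\<lambda>i. (b1 i, O1 i)) ` I1 \<union> (\<lambda>i. (b2 i, O2 i)) ` I2"
    unfolding I_def b_def Ob_def by (rule image_interleave)
  have from_pairs: "(\<exists>i\<in>I1. b j = b1 i \<and> Ob j = O1 i) \<or> (\<exists>i\<in>I2. b j = b2 i \<and> Ob j = O2 i)"
    if "j \<in> I" for j
  proof -
    have "(b j, Ob j) \<in> (\<lambda>i. (b1 i, O1 i)) ` I1 \<union> (\<lambda>i. (b2 i, O2 i)) ` I2"
      using that unfolding pairs[symmetric] by simp
    then show ?thesis by auto
  qed
  have O: "Ob j \<in> Om" "b j \<in> D0" if "j \<in> I" for j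
    using from_pairs[OF that] repD(3,4)[OF R1] repD(3,4)[OF R2] by auto
  have wb: "b j \<lless> f F" if "j \<in> I" "F \<in> Xhat Om" "Ob j \<in> opens_at F" for j F
    using from_pairs[OF that(1)] wb1 wb2 that(2,3) by auto
  define k where "k = step_join X I b Ob"
  have R: "rep I b Ob k"
    unfolding is_rep_def k_def using I O consistent_family_if_way_below[OF O(1) wb] by auto
  have "k \<in> approximants f" by (rule approximantsI[OF R]) (rule wb)
  moreover have "\<forall>x\<in>X. h1 x \<le> k x \<and> h2 x \<le> k x"
    using step_join_mono[OF R1 R] step_join_mono[OF R2 R] unfolding pairs by auto
  ultimately show ?thesis by (rule that)
qed

lemma approximants_finite_bound:
  assumes "finite H" "H \<subseteq> approximants f"
  obtains k where "k \<in> approximants f" "\<And>h x. h \<in> H \<Longrightarrow> x \<in> X \<Longrightarrow> h x \<le> k x"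
proof -
  have "\<exists>k\<in>approximants f. \<forall>h\<in>H. \<forall>x\<in>X. h x \<le> k x"
    using assms
  proof (induction H rule: finite_induct)
    case empty
    have "step_empty \<in> approximants f" by (rule approximantsI[OF step_empty_rep]) auto
    then show ?case by blast
  next
    case (insert h H)
    then obtain k where k: "k \<in> approximants f" "\<forall>g\<in>H. \<forall>x\<in>X. g x \<le> k x" by auto
    have "h \<in> approximants f" using insert.prems by simp
    then obtain k' where "k' \<in> approximants f" "\<forall>x\<in>X. h x \<le> k' x \<and> k x \<le> k' x"
      by (rule approximants_join[OF _ k(1)])
    then show ?case using k(2) order_trans by blast
  qed
  then show ?thesis using that by blast
qed

lemma approximant_way_above_on:
  assumes f: "f \<in> CF" and W0: "W0 \<in> Om"
    and a: "\<And>F. F \<in> Xhat Om \<Longrightarrow> W0 \<in> opens_at F \<Longrightarrow> a \<lless> f F"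
  obtains k where "k \<in> approximants f" "\<And>x. x \<in> W0 \<Longrightarrow> a \<lless> k x"
proof -
  have "\<exists>V\<in>opens_at F. \<exists>c. c \<in> D0 \<and> a \<lless> c \<and> (\<forall>G\<in>Xhat Om. V \<in> opens_at G \<longrightarrow> c \<lless> f G)"
    if F: "F \<in> Xhat Om" "W0 \<in> opens_at F" for F
  proof -
    obtain c where c: "c \<in> D0" "a \<lless> c" "c \<lless> f F" using way_below_interpolate[OF a[OF F]] by blast
    obtain V where "V \<in> opens_at F" "\<forall>G\<in>Xhat Om. V \<in> opens_at G \<longrightarrow> f G \<in> {z. c \<lless> z}"
      using cont_fun_space_nbhd[OF f scott_open_way_above F(1)] c(3) by blast
    then show ?thesis using c(1,2) by auto
  qed
  then obtain C' c where C': "finite C'" "C' \<subseteq> Om" "W0 \<subseteq> \<Union>C'"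
    and c: "\<forall>V\<in>C'. c V \<in> D0 \<and> a \<lless> c V \<and> (\<forall>G\<in>Xhat Om. V \<in> opens_at G \<longrightarrow> c V \<lless> f G)"
    by (rule Xhat_compact_choice[OF W0])
  have "(\<lambda>V. step_single (c V) V) ` C' \<subseteq> approximants f"
    using c C'(2) step_single_approximant by auto
  then obtain k where k: "k \<in> approximants f"
    "\<And>h x. h \<in> (\<lambda>V. step_single (c V) V) ` C' \<Longrightarrow> x \<in> X \<Longrightarrow> h x \<le> k x"
    using approximants_finite_bound C'(1) by blast
  have "a \<lless> k x" if x: "x \<in> W0" for x
  proof -
    obtain V where V: "V \<in> C'" "x \<in> V" using x C'(3) by blast
    then have "x \<in> X" "step_single (c V) V x = c V"
      using C'(2) Om_subset step_single_value c by auto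
    then have "c V \<le> k x" using k(2) V(1) by force
    then show ?thesis using c V(1) way_below_le_trans by blast
  qed
  then show ?thesis using that k(1) by blast
qed

lemma approximant_prec_bound:
  assumes f: "f \<in> CF" and h: "h \<in> approximants f"
  obtains H where "finite H" "H \<subseteq> approximants f"
    "\<forall>k. (\<forall>g\<in>H. \<forall>x\<in>X. g x \<le> k x) \<longrightarrow> step_prec h k"
proof -
  obtain I b Ob where R: "rep I b Ob h"
    and wb: "\<forall>i\<in>I. \<forall>F\<in>Xhat Om. Ob i \<in> opens_at F \<longrightarrow> b i \<lless> f F"
    by (rule approximantsE[OF h])
  have "\<exists>k. k \<in> approximants f \<and> (\<forall>x\<in>Ob i. b i \<lless> k x)" if "i \<in> I" for i
    using approximant_way_above_on[OF f repD(3)[OF R that]] wb that by metis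
  then obtain kk where kk: "\<And>i. i \<in> I \<Longrightarrow> kk i \<in> approximants f \<and> (\<forall>x\<in>Ob i. b i \<lless> kk i x)"
    by metis
  have "step_prec h k" if k: "\<forall>g\<in>kk ` I. \<forall>x\<in>X. g x \<le> k x" for k
  proof (rule step_precI[OF R])
    fix i x assume ix: "i \<in> I" "x \<in> Ob i"
    then have "kk i x \<le> k x" using k Om_subset[OF repD(3)[OF R ix(1)]] by auto
    then show "b i \<lless> k x" using kk[OF ix(1)] ix(2) way_below_le_trans by blast
  qed
  moreover have "finite (kk ` I)" "kk ` I \<subseteq> approximants f" using repD(1)[OF R] kk by auto
  ultimately show ?thesis using that by blast
qed

lemma approximants_RIC:
  assumes f: "f \<in> CF"
  shows "approximants f \<in> RIC"
proof (rule RICI[OF approximants_subset_Babs])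
  show "approximants f \<noteq> {}" using approximantsI[OF step_empty_rep] by blast
next
  show "h' \<in> approximants f" if h: "h \<in> approximants f" and "step_prec h' h" for h h'
  proof -
    have "h \<in> Babs T Om D0" using h approximants_subset_Babs by auto
    obtain I b Ob where R: "rep I b Ob h'"
      and wb: "\<forall>i\<in>I. \<forall>F\<in>Xhat Om. Ob i \<in> opens_at F \<longrightarrow> b i \<lless> ext_step h F"
      by (rule step_prec_ext_step[OF \<open>step_prec h' h\<close> \<open>h \<in> Babs T Om D0\<close>])
    show ?thesis
    proof (rule approximantsI[OF R])
      fix i F assume "i \<in> I" "F \<in> Xhat Om" "Ob i \<in> opens_at F"
      then show "b i \<lless> f F" using wb ext_step_le_if_approximant[OF h] way_below_le_trans by blast
    qed
  qed
next
  show "\<exists>h\<in>approximants f. step_prec h1 h \<and> step_prec h2 h"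
    if h12: "h1 \<in> approximants f" "h2 \<in> approximants f" for h1 h2
  proof -
    obtain H1 where H1: "finite H1" "H1 \<subseteq> approximants f"
      "\<forall>k. (\<forall>g\<in>H1. \<forall>x\<in>X. g x \<le> k x) \<longrightarrow> step_prec h1 k"
      by (rule approximant_prec_bound[OF f h12(1)])
    obtain H2 where H2: "finite H2" "H2 \<subseteq> approximants f"
      "\<forall>k. (\<forall>g\<in>H2. \<forall>x\<in>X. g x \<le> k x) \<longrightarrow> step_prec h2 k"
      by (rule approximant_prec_bound[OF f h12(2)])
    obtain k where "k \<in> approximants f" "\<And>h x. h \<in> H1 \<union> H2 \<Longrightarrow> x \<in> X \<Longrightarrow> h x \<le> k x"
      using approximants_finite_bound[of "H1 \<union> H2" f] H1(1,2) H2(1,2) by auto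
    then show ?thesis using H1(3) H2(3) by blast
  qed
qed

lemma RIC_finite_bound:
  assumes R: "R \<in> RIC" and "finite G" "G \<subseteq> R"
  shows "\<exists>g\<in>R. \<forall>g'\<in>G. \<forall>x\<in>X. g' x \<le> g x"
  using assms(2,3)
proof (induction G rule: finite_induct)
  case empty
  then show ?case using RICD(2)[OF R] by blast
next
  case (insert h G)
  then obtain g where g: "g \<in> R" "\<forall>g'\<in>G. \<forall>x\<in>X. g' x \<le> g x" by auto
  have "h \<in> R" using insert.prems by simp
  then obtain g' where g': "g' \<in> R" "step_prec h g'" "step_prec g g'" using RICD(4)[OF R _ g(1)] by blast
  have "g'' x \<le> g' x" if "g'' \<in> insert h G" "x \<in> X" for g'' x
  proof (cases "g'' = h")
    case True
    then show ?thesis using step_prec_le[OF g'(2) \<open>x \<in> X\<close>] by simp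
  next
    case False
    then have "g'' x \<le> g x" using g(2) that by auto
    also have "g x \<le> g' x" using step_prec_le[OF g'(3) \<open>x \<in> X\<close>] .
    finally show ?thesis .
  qed
  then show ?case using g'(1) by blast
qed

lemma RIC_subset_approximants:
  assumes R: "R \<in> RIC"
  shows "R \<subseteq> approximants (fun_of_ideal R)"
proof
  fix h assume "h \<in> R"
  then obtain g where g: "g \<in> R" "step_prec h g" using RICD(4)[OF R] by blast
  have "g \<in> Babs T Om D0" using g(1) RICD(1)[OF R] by auto
  obtain I b Ob where Rp: "rep I b Ob h"
    and wb: "\<forall>i\<in>I. \<forall>F\<in>Xhat Om. Ob i \<in> opens_at F \<longrightarrow> b i \<lless> ext_step g F"
    by (rule step_prec_ext_step[OF g(2) \<open>g \<in> Babs T Om D0\<close>])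
  show "h \<in> approximants (fun_of_ideal R)"
  proof (rule approximantsI[OF Rp])
    fix i F assume iF: "i \<in> I" "F \<in> Xhat Om" "Ob i \<in> opens_at F"
    have "ext_step g F \<le> fun_of_ideal R F" using is_lub_upper[OF is_lub_fun_of_ideal[OF R iF(2)]] g(1) by blast
    then show "b i \<lless> fun_of_ideal R F" using wb iF way_below_le_trans by blast
  qed
qed

lemma ideal_way_above_on:
  assumes R: "R \<in> RIC" and W0: "W0 \<in> Om"
    and a: "\<And>F. F \<in> Xhat Om \<Longrightarrow> W0 \<in> opens_at F \<Longrightarrow> a \<lless> fun_of_ideal R F"
  shows "\<exists>g\<in>R. \<forall>x\<in>W0. a \<lless> g x"
proof -
  have "\<exists>V\<in>opens_at F. \<exists>g. g \<in> R \<and> (\<forall>x\<in>V. a \<lless> g x)"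
    if F: "F \<in> Xhat Om" "W0 \<in> opens_at F" for F
  proof -
    obtain c where c: "a \<lless> c" "c \<lless> fun_of_ideal R F" using way_below_interpolate[OF a[OF F]] by blast
    obtain g where g: "g \<in> R" "c \<le> ext_step g F"
      using way_below_lubE[OF c(2) directed_ext_step_image[OF R F(1)] is_lub_fun_of_ideal[OF R F(1)]]
      by blast
    obtain I b Ob where "rep I b Ob g" by (rule RIC_rep[OF R g(1)])
    then obtain V where V: "V \<in> opens_at F" "\<And>x. x \<in> V \<Longrightarrow> ext_step g F \<le> g x"
      using ext_step_nbhd F(1) by metis
    have "\<forall>x\<in>V. a \<lless> g x" using V(2) c(1) g(2) way_below_le_trans order_trans by metis
    then show ?thesis using g(1) V(1) by blast
  qed
  then obtain C' gg where C': "finite C'" "C' \<subseteq> Om" "W0 \<subseteq> \<Union>C'"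
    and gg: "\<forall>V\<in>C'. gg V \<in> R \<and> (\<forall>x\<in>V. a \<lless> gg V x)"
    by (rule Xhat_compact_choice[OF W0])
  obtain g where g: "g \<in> R" "\<forall>g'\<in>gg ` C'. \<forall>x\<in>X. g' x \<le> g x"
    using RIC_finite_bound[OF R, of "gg ` C'"] C'(1) gg by blast
  have "a \<lless> g x" if x: "x \<in> W0" for x
  proof -
    obtain V where V: "V \<in> C'" "x \<in> V" using x C'(3) by blast
    have "x \<in> X" using x Om_subset[OF W0] by auto
    then have "gg V x \<le> g x" using g(2) V(1) by blast
    then show ?thesis using gg V way_below_le_trans by blast
  qed
  then show ?thesis using g(1) by blast
qed

lemma approximants_subset_RIC:
  assumes R: "R \<in> RIC"
  shows "approximants (fun_of_ideal R) \<subseteq> R"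
proof
  fix h assume h: "h \<in> approximants (fun_of_ideal R)"
  obtain I b Ob where Rp: "rep I b Ob h"
    and wb: "\<forall>i\<in>I. \<forall>F\<in>Xhat Om. Ob i \<in> opens_at F \<longrightarrow> b i \<lless> fun_of_ideal R F"
    by (rule approximantsE[OF h])
  have "\<exists>g\<in>R. \<forall>x\<in>Ob i. b i \<lless> g x" if "i \<in> I" for i
    using ideal_way_above_on[OF R repD(3)[OF Rp that]] wb that by blast
  then obtain gi where gi: "\<And>i. i \<in> I \<Longrightarrow> gi i \<in> R \<and> (\<forall>x\<in>Ob i. b i \<lless> gi i x)" by metis
  obtain g where g: "g \<in> R" "\<forall>g'\<in>gi ` I. \<forall>x\<in>X. g' x \<le> g x"
    using RIC_finite_bound[OF R, of "gi ` I"] repD(1)[OF Rp] gi by blast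
  have "step_prec h g"
  proof (rule step_precI[OF Rp])
    fix i x assume ix: "i \<in> I" "x \<in> Ob i"
    then have "gi i x \<le> g x" using g(2) Om_subset[OF repD(3)[OF Rp ix(1)]] by auto
    then show "b i \<lless> g x" using gi[OF ix(1)] ix(2) way_below_le_trans by blast
  qed
  moreover have "h \<in> Babs T Om D0" using h approximants_subset_Babs by auto
  ultimately show "h \<in> R" using RICD(3)[OF R g(1)] by blast
qed

lemma approximants_fun_of_ideal:
  assumes "R \<in> RIC"
  shows "approximants (fun_of_ideal R) = R"
  using approximants_subset_RIC[OF assms] RIC_subset_approximants[OF assms] by (rule subset_antisym)

lemma approximants_mono:
  assumes "fun_le (Xhat Om) f g"
  shows "approximants f \<subseteq> approximants g"
proof
  fix h assume "h \<in> approximants f"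
  then obtain I b Ob where Rp: "rep I b Ob h"
    and wb: "\<forall>i\<in>I. \<forall>F\<in>Xhat Om. Ob i \<in> opens_at F \<longrightarrow> b i \<lless> f F"
    by (rule approximantsE)
  show "h \<in> approximants g"
  proof (rule approximantsI[OF Rp])
    fix i F assume "i \<in> I" "F \<in> Xhat Om" "Ob i \<in> opens_at F"
    then have "b i \<lless> f F" "f F \<le> g F" using wb assms unfolding fun_le_def by auto
    then show "b i \<lless> g F" by (rule way_below_le_trans)
  qed
qed

lemma fun_of_ideal_le_iff:
  assumes "R1 \<in> RIC" "R2 \<in> RIC"
  shows "R1 \<subseteq> R2 \<longleftrightarrow> fun_le (Xhat Om) (fun_of_ideal R1) (fun_of_ideal R2)"
proof
  assume "R1 \<subseteq> R2"
  then show "fun_le (Xhat Om) (fun_of_ideal R1) (fun_of_ideal R2)"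
    unfolding fun_le_def using is_lub_mono is_lub_fun_of_ideal assms by blast
next
  assume "fun_le (Xhat Om) (fun_of_ideal R1) (fun_of_ideal R2)"
  then show "R1 \<subseteq> R2" using approximants_mono approximants_fun_of_ideal assms by metis
qed

end

theorem mainTheorem19:
  fixes T :: "'a topology" and \<Omega>0 :: "'a set set" and D0 :: "'b::order set"
  assumes "viable_base T \<Omega>0"
    and "bc_domain TYPE('b)"
    and "is_basis D0"
  shows "\<exists>\<phi>. bij_betw \<phi> (rounded_ideal_completion T \<Omega>0 D0) (cont_fun_space \<Omega>0 :: ('a set set set \<Rightarrow> 'b) set)
           \<and> (\<forall>R1\<in>rounded_ideal_completion T \<Omega>0 D0. \<forall>R2\<in>rounded_ideal_completion T \<Omega>0 D0.
                R1 \<subseteq> R2 \<longleftrightarrow> fun_le (Xhat \<Omega>0) (\<phi> R1) (\<phi> R2))"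
proof -
  interpret step_functions D0 T \<Omega>0
    by unfold_locales (use assms in auto)
  have "bij_betw fun_of_ideal RIC CF"
  proof (rule bij_betw_byWitness[where f' = approximants])
    show "\<forall>R\<in>RIC. approximants (fun_of_ideal R) = R" using approximants_fun_of_ideal by blast
    show "\<forall>f\<in>CF. fun_of_ideal (approximants f) = f" using fun_of_ideal_approximants by blast
    show "fun_of_ideal ` RIC \<subseteq> CF" using fun_of_ideal_cont by blast
    show "approximants ` CF \<subseteq> RIC" using approximants_RIC by blast
  qed
  then show ?thesis using fun_of_ideal_le_iff by blast
qed

end
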